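(* Let $G=(V,E)$ be a finite simple graph with $|V|=m$ and $|E|=n$ that has at least one sink-free orientation. Run the following sink-popping algorithm. Orient each edge independently and uniformly at random. While the current orientation has a sink, choose any sink $v$ (by any rule) and reorient every edge incident to $v$ independently and uniformly at random. Then: (i) the algorithm terminates with probability $1$, and the output is uniformly distributed over the sink-free orientations of $G$; (ii) the expected number of iterations (sinks popped) is at most $m^2=|V|^2$; (iii) the expected total number of edge reorientations is at most $2mn=2|V|\,|E|$. Here an edge is counted once per iteration in which it is re-randomised, whether or not its orientation changes.
   Context: An orientation of $G$ assigns a direction to every edge. A sink of an orientation is a vertex $v$ such that every edge incident to $v$ is directed towards $v$. An orientation is sink-free if it has no sink. *)

theory Defs
  imports "HOL-Probability.Probability"
begin

definition simple_graph :: "'a set \<Rightarrow> 'a set set \<Rightarrow> bool" where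
  "simple_graph V E \<longleftrightarrow> finite V \<and> (\<forall>e\<in>E. \<exists>u v. u \<in> V \<and> v \<in> V \<and> u \<noteq> v \<and> e = {u, v})"

(* An orientation assigns to every edge its head (the endpoint it points to). *)
definition orientations :: "'a set set \<Rightarrow> ('a set \<Rightarrow> 'a) set" where
  "orientations E = PiE E (\<lambda>e. e)"

definition is_sink :: "'a set set \<Rightarrow> ('a set \<Rightarrow> 'a) \<Rightarrow> 'a \<Rightarrow> bool" where
  "is_sink E \<sigma> v \<longleftrightarrow> (\<forall>e\<in>E. v \<in> e \<longrightarrow> \<sigma> e = v)"

definition has_sink :: "'a set \<Rightarrow> 'a set set \<Rightarrow> ('a set \<Rightarrow> 'a) \<Rightarrow> bool" where
  "has_sink V E \<sigma> \<longleftrightarrow> (\<exists>v\<in>V. is_sink E \<sigma> v)"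

definition sink_free_orientations :: "'a set \<Rightarrow> 'a set set \<Rightarrow> ('a set \<Rightarrow> 'a) set" where
  "sink_free_orientations V E = {\<sigma> \<in> orientations E. \<not> has_sink V E \<sigma>}"

definition random_orientation :: "'a set set \<Rightarrow> ('a set \<Rightarrow> 'a) pmf" where
  "random_orientation E = Pi_pmf E undefined (\<lambda>e. pmf_of_set e)"

definition pop :: "'a set set \<Rightarrow> ('a set \<Rightarrow> 'a) \<Rightarrow> 'a \<Rightarrow> ('a set \<Rightarrow> 'a) pmf" where
  "pop E \<sigma> v = Pi_pmf E undefined (\<lambda>e. if v \<in> e then pmf_of_set e else return_pmf (\<sigma> e))"

(* States are histories: list of orientations, most recent first.
   The sink-selection rule "sel" may depend on the whole history. *)
definition sp_step :: "'a set \<Rightarrow> 'a set set \<Rightarrow> (('a set \<Rightarrow> 'a) list \<Rightarrow> 'a)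
    \<Rightarrow> ('a set \<Rightarrow> 'a) list \<Rightarrow> ('a set \<Rightarrow> 'a) list pmf" where
  "sp_step V E sel h =
     (if has_sink V E (hd h) then map_pmf (\<lambda>\<sigma>'. \<sigma>' # h) (pop E (hd h) (sel h))
      else return_pmf h)"

fun sp_hist :: "'a set \<Rightarrow> 'a set set \<Rightarrow> (('a set \<Rightarrow> 'a) list \<Rightarrow> 'a)
    \<Rightarrow> nat \<Rightarrow> ('a set \<Rightarrow> 'a) list pmf" where
  "sp_hist V E sel 0 = map_pmf (\<lambda>\<sigma>. [\<sigma>]) (random_orientation E)"
| "sp_hist V E sel (Suc k) = bind_pmf (sp_hist V E sel k) (sp_step V E sel)"

definition degree :: "'a set set \<Rightarrow> 'a \<Rightarrow> nat" where
  "degree E v = card {e \<in> E. v \<in> e}"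

(* Number of edge re-randomisations during the pops recorded in history h:
   the i-th most recent pop happened at history (drop i h) at vertex sel (drop i h). *)
definition reorientations :: "'a set set \<Rightarrow> (('a set \<Rightarrow> 'a) list \<Rightarrow> 'a)
    \<Rightarrow> ('a set \<Rightarrow> 'a) list \<Rightarrow> nat" where
  "reorientations E sel h = (\<Sum>i\<in>{1..<length h}. degree E (sel (drop i h)))"

end

theory Submission
  imports Defs
begin

text \<open>Popping two sinks in either order re-randomises the same edges, so the expected
  value of any quantity determined by the final orientation and by the number of pops at
  each vertex does not depend on the rule that chooses the sinks; each claim can therefore
  be checked for a convenient fixed rule.  Termination: from every orientation,
  \<open>card E + 1\<close> lucky pops reach a fixed sink-free orientation, which happens with
  probability at least \<open>2 ^ - (card E)\<^sup>2\<close>.  For a vertex \<open>u\<close>, use the rule that pops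
  \<open>u\<close> only when it is the only sink.  Under it the probability of an orientation depends
  only on its sinks other than \<open>u\<close>, so all sink-free orientations are equally likely, and
  the expected number of pops at \<open>u\<close> telescopes to at most \<open>card (single_sink u) / N\<close>,
  where \<open>N\<close> is the number of sink-free orientations and \<open>single_sink u\<close> is the set of
  orientations whose only sink is \<open>u\<close>.  Each of these
  arises from a sink-free orientation by reversing a walk of length at most \<open>card V\<close>
  ending at \<open>u\<close>, so \<open>card (single_sink u) \<le> card V * N\<close>; summing over \<open>u\<close>,
  unweighted or weighted by degree, gives both bounds.\<close>

abbreviation expect :: "'b pmf \<Rightarrow> ('b \<Rightarrow> real) \<Rightarrow> real" where
  "expect M g \<equiv> measure_pmf.expectation M g"

lemma expect_finite_sum:
  assumes "finite A" "set_pmf M \<subseteq> A"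
  shows "expect M g = (\<Sum>a\<in>A. pmf M a * g a)"
  by (subst integral_measure_pmf_real[OF assms(1)]) (use assms in \<open>auto simp: mult.commute\<close>)

lemma expect_bind_finite:
  assumes "finite (set_pmf M)" "\<And>x. x \<in> set_pmf M \<Longrightarrow> finite (set_pmf (N x))"
  shows "expect (bind_pmf M N) g = expect M (\<lambda>x. expect (N x) g)"
  using pmf_expectation_bind[where A = "set_pmf M" and p = M and f = N and h = g] assms
  by (simp add: expect_finite_sum[OF assms(1) order_refl])

lemma expect_cong:
  assumes "\<And>x. x \<in> set_pmf M \<Longrightarrow> f x = g x"
  shows "expect M f = expect M g"
  by (rule integral_cong_AE) (use assms in \<open>auto simp: AE_measure_pmf_iff\<close>)

lemma expect_mono:
  assumes "finite (set_pmf M)" "\<And>x. x \<in> set_pmf M \<Longrightarrow> f x \<le> g x"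
  shows "expect M f \<le> expect M g"
  unfolding expect_finite_sum[OF assms(1) order_refl]
  by (intro sum_mono mult_left_mono) (use assms in auto)

lemma expect_nonneg:
  assumes "\<And>x. x \<in> set_pmf M \<Longrightarrow> 0 \<le> f x"
  shows "0 \<le> expect M f"
  by (rule integral_nonneg_AE) (use assms in \<open>auto simp: AE_measure_pmf_iff\<close>)

lemma expect_add:
  assumes "finite (set_pmf M)"
  shows "expect M (\<lambda>x. f x + g x) = expect M f + expect M g"
  using assms by (intro Bochner_Integration.integral_add) (auto intro: integrable_measure_pmf_finite)

lemma expect_diff:
  assumes "finite (set_pmf M)"
  shows "expect M (\<lambda>x. f x - g x) = expect M f - expect M g"
  using assms by (intro Bochner_Integration.integral_diff) (auto intro: integrable_measure_pmf_finite)

lemma expect_sum: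
  assumes "finite (set_pmf M)"
  shows "expect M (\<lambda>x. \<Sum>i\<in>I. f i x) = (\<Sum>i\<in>I. expect M (f i))"
  using assms by (intro Bochner_Integration.integral_sum) (auto intro: integrable_measure_pmf_finite)

lemma prob_eq_expect_indicator: "measure_pmf.prob M A = expect M (\<lambda>x. if x \<in> A then 1 else 0)"
proof -
  have "(\<lambda>x. if x \<in> A then 1 else 0 :: real) = indicator A" by (auto simp: indicator_def)
  thus ?thesis by (simp add: measure_pmf.emeasure_eq_measure)
qed

lemma tendsto_power_div_zero:
  fixes d :: real
  assumes "0 < d" "d \<le> 1" "0 < N"
  shows "(\<lambda>k. (1 - d) ^ (k div N)) \<longlonglongrightarrow> 0"
proof (rule filterlim_compose[of "\<lambda>n. (1 - d) ^ n"])
  show "(\<lambda>n. (1 - d) ^ n) \<longlonglongrightarrow> 0"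
    by (rule LIMSEQ_power_zero) (use assms in auto)
  show "filterlim (\<lambda>k. k div N) at_top sequentially"
    unfolding filterlim_at_top eventually_sequentially
  proof
    fix Z :: nat
    have "Z \<le> k div N" if "Z * N \<le> k" for k
      using div_le_mono[OF that, of N] assms(3) by simp
    thus "\<exists>K. \<forall>k\<ge>K. Z \<le> k div N" by blast
  qed
qed

lemma inj_on_funpow_before:
  fixes f :: "'a \<Rightarrow> 'a"
  assumes "(f ^^ n) x = u" "\<And>m. m < n \<Longrightarrow> (f ^^ m) x \<noteq> u"
  shows "inj_on (\<lambda>i. (f ^^ i) x) {0..<n}"
proof (rule inj_onI, rule ccontr)
  have hit: "(f ^^ (n - j + i)) x = u" if "j < n" "(f ^^ i) x = (f ^^ j) x" for i j
  proof -
    have "(f ^^ (n - j + i)) x = (f ^^ (n - j)) ((f ^^ i) x)" by (simp only: funpow_add comp_apply)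
    also have "\<dots> = (f ^^ (n - j + j)) x" using that(2) by (simp only: funpow_add comp_apply)
    also have "\<dots> = (f ^^ n) x" using that(1) by simp
    finally show ?thesis using assms(1) by simp
  qed
  fix i j assume ij: "i \<in> {0..<n}" "j \<in> {0..<n}" "(f ^^ i) x = (f ^^ j) x" "i \<noteq> j"
  consider "i < j" | "j < i" using ij(4) by linarith
  thus False
  proof cases
    case 1
    hence "n - j + i < n" using ij(2) by auto
    thus False using hit[of j i] ij assms(2)[of "n - j + i"] by auto
  next
    case 2
    hence "n - i + j < n" using ij(1) by auto
    thus False using hit[of i j] ij assms(2)[of "n - i + j"] by auto
  qed
qed

lemma pop_pop:
  assumes "finite E"
  shows "bind_pmf (pop E \<sigma> a) (\<lambda>\<sigma>'. pop E \<sigma>' b) =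
    Pi_pmf E undefined (\<lambda>e. if a \<in> e \<or> b \<in> e then pmf_of_set e else return_pmf (\<sigma> e))"
proof -
  have "bind_pmf (pop E \<sigma> a) (\<lambda>\<sigma>'. pop E \<sigma>' b) =
      Pi_pmf E undefined (\<lambda>e. bind_pmf (if a \<in> e then pmf_of_set e else return_pmf (\<sigma> e))
        (\<lambda>x. if b \<in> e then pmf_of_set e else return_pmf x))"
    unfolding pop_def
    by (rule Pi_pmf_bind[of E undefined "\<lambda>e. if a \<in> e then pmf_of_set e else return_pmf (\<sigma> e)"
          "\<lambda>e x. if b \<in> e then pmf_of_set e else return_pmf x" undefined, OF assms, symmetric])
  also have "\<dots> = Pi_pmf E undefined (\<lambda>e. if a \<in> e \<or> b \<in> e then pmf_of_set e else return_pmf (\<sigma> e))"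
  proof (intro Pi_pmf_cong refl)
    fix e
    show "bind_pmf (if a \<in> e then pmf_of_set e else return_pmf (\<sigma> e))
        (\<lambda>x. if b \<in> e then pmf_of_set e else return_pmf x) =
      (if a \<in> e \<or> b \<in> e then pmf_of_set e else return_pmf (\<sigma> e))"
      by (cases "b \<in> e") (auto simp: bind_return_pmf bind_return_pmf')
  qed
  finally show ?thesis .
qed

lemma pop_commute:
  assumes "finite E"
  shows "bind_pmf (pop E \<sigma> a) (\<lambda>\<sigma>'. pop E \<sigma>' b) = bind_pmf (pop E \<sigma> b) (\<lambda>\<sigma>'. pop E \<sigma>' a)"
  unfolding pop_pop[OF assms] by (intro Pi_pmf_cong) auto


locale finite_simple_graph =
  fixes V :: "'a set" and E :: "'a set set"
  assumes simple_graph: "simple_graph V E"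
begin

lemma finite_V: "finite V"
  using simple_graph by (simp add: simple_graph_def)

lemma edge_doubleton: "e \<in> E \<Longrightarrow> \<exists>u v. u \<in> V \<and> v \<in> V \<and> u \<noteq> v \<and> e = {u, v}"
  using simple_graph by (simp add: simple_graph_def)

lemma edge_subset: "e \<in> E \<Longrightarrow> e \<subseteq> V"
  using edge_doubleton by blast

lemma finite_E: "finite E"
  using edge_subset finite_V by (meson Pow_iff finite_Pow_iff finite_subset subsetI)

lemma card_edge: "e \<in> E \<Longrightarrow> card e = 2"
  using edge_doubleton by fastforce

lemma finite_edge: "e \<in> E \<Longrightarrow> finite e"
  using edge_doubleton by fastforce

lemma pmf_of_edge:
  assumes "e \<in> E"
  shows "pmf (pmf_of_set e) x = (if x \<in> e then 1/2 else 0)"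
proof -
  have "e \<noteq> {}" using card_edge[OF assms] by auto
  thus ?thesis using card_edge[OF assms] finite_edge[OF assms] by (simp add: pmf_of_set indicator_def)
qed

lemma sum_degree: "(\<Sum>u\<in>V. degree E u) = 2 * card E"
proof -
  have "(\<Sum>u\<in>V. degree E u) = (\<Sum>u\<in>V. \<Sum>e\<in>E. if u \<in> e then 1 else 0)"
    unfolding degree_def using finite_E by (intro sum.cong) (auto simp: sum.inter_filter[symmetric])
  also have "\<dots> = (\<Sum>e\<in>E. card {u\<in>V. u \<in> e})"
    by (subst sum.swap) (simp add: sum.inter_filter[OF finite_V, symmetric])
  also have "\<dots> = (\<Sum>e\<in>E. 2)"
  proof (intro sum.cong refl)
    fix e assume "e \<in> E"
    hence "{u\<in>V. u \<in> e} = e" using edge_subset by auto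
    thus "card {u\<in>V. u \<in> e} = 2" using card_edge[OF \<open>e \<in> E\<close>] by simp
  qed
  finally show ?thesis by simp
qed

abbreviation \<Omega> :: "('a set \<Rightarrow> 'a) set" where
  "\<Omega> \<equiv> orientations E"

lemma in_orientations_iff:
  "\<sigma> \<in> \<Omega> \<longleftrightarrow> (\<forall>e\<in>E. \<sigma> e \<in> e) \<and> (\<forall>e. e \<notin> E \<longrightarrow> \<sigma> e = undefined)"
  by (auto simp: orientations_def PiE_def extensional_def)

lemma finite_orientations: "finite \<Omega>"
  unfolding orientations_def by (intro finite_PiE finite_E) (auto dest: finite_edge)

definition agrees_off :: "'a \<Rightarrow> ('a set \<Rightarrow> 'a) \<Rightarrow> ('a set \<Rightarrow> 'a) \<Rightarrow> bool" where
  "agrees_off v \<sigma> \<sigma>' \<longleftrightarrow> (\<forall>e\<in>E. v \<notin> e \<longrightarrow> \<sigma>' e = \<sigma> e)"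

lemma pmf_pop:
  assumes \<sigma>: "\<sigma> \<in> \<Omega>"
  shows "pmf (pop E \<sigma> v) \<sigma>' = (if \<sigma>' \<in> \<Omega> \<and> agrees_off v \<sigma> \<sigma>' then (1/2) ^ degree E v else 0)"
proof (cases "\<forall>e. e \<notin> E \<longrightarrow> \<sigma>' e = undefined")
  case False
  thus ?thesis unfolding pop_def by (subst pmf_Pi[OF finite_E]) (auto simp: in_orientations_iff)
next
  case True
  define F where "F e = (if v \<in> e then (if \<sigma>' e \<in> e then 1/2 else 0)
    else (if \<sigma>' e = \<sigma> e then 1 else 0 :: real))" for e
  have "pmf (pop E \<sigma> v) \<sigma>' = (\<Prod>e\<in>E. F e)"
    unfolding pop_def using True
    by (subst pmf_Pi[OF finite_E]) (auto simp: F_def pmf_of_edge intro!: prod.cong)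
  also have "\<dots> = (if \<sigma>' \<in> \<Omega> \<and> agrees_off v \<sigma> \<sigma>' then (1/2) ^ degree E v else 0)"
  proof (cases "\<sigma>' \<in> \<Omega> \<and> agrees_off v \<sigma> \<sigma>'")
    case True
    hence "(\<Prod>e\<in>E. F e) = (\<Prod>e\<in>{e\<in>E. v \<in> e}. 1/2)"
      using \<sigma> by (subst prod.inter_filter[OF finite_E])
        (auto simp: F_def in_orientations_iff agrees_off_def intro!: prod.cong)
    thus ?thesis using True by (simp add: degree_def)
  next
    case False
    with True \<sigma> obtain e where "e \<in> E" "\<not> (\<sigma>' e \<in> e \<and> (v \<notin> e \<longrightarrow> \<sigma>' e = \<sigma> e))"
      by (auto simp: in_orientations_iff agrees_off_def)
    hence "e \<in> E" "F e = 0"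
      using \<sigma> by (auto simp: F_def in_orientations_iff)
    hence "(\<Prod>e\<in>E. F e) = 0" using finite_E by (intro prod_zero) auto
    thus ?thesis using False by simp
  qed
  finally show ?thesis .
qed

lemma set_pop: "\<sigma> \<in> \<Omega> \<Longrightarrow> set_pmf (pop E \<sigma> v) = {\<sigma>'\<in>\<Omega>. agrees_off v \<sigma> \<sigma>'}"
  using pmf_pop by (auto simp: set_pmf_eq)

lemma finite_set_pop: "\<sigma> \<in> \<Omega> \<Longrightarrow> finite (set_pmf (pop E \<sigma> v))"
  using set_pop finite_orientations by auto

lemma set_pop_subset: "\<sigma> \<in> \<Omega> \<Longrightarrow> \<sigma>' \<in> set_pmf (pop E \<sigma> v) \<Longrightarrow> \<sigma>' \<in> \<Omega>"
  using set_pop by auto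

lemma expect_pop:
  assumes "\<sigma> \<in> \<Omega>"
  shows "expect (pop E \<sigma> v) g = (\<Sum>\<sigma>'\<in>{\<sigma>'\<in>\<Omega>. agrees_off v \<sigma> \<sigma>'}. (1/2) ^ degree E v * g \<sigma>')"
  using finite_orientations set_pop[OF assms]
  by (subst expect_finite_sum[of "{\<sigma>'\<in>\<Omega>. agrees_off v \<sigma> \<sigma>'}"]) (auto simp: pmf_pop[OF assms])

lemma pmf_random_orientation:
  "pmf (random_orientation E) \<sigma> = (if \<sigma> \<in> \<Omega> then (1/2) ^ card E else 0)"
proof (cases "\<forall>e. e \<notin> E \<longrightarrow> \<sigma> e = undefined")
  case False
  thus ?thesis unfolding random_orientation_def
    by (subst pmf_Pi[OF finite_E]) (auto simp: in_orientations_iff)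
next
  case True
  hence "pmf (random_orientation E) \<sigma> = (\<Prod>e\<in>E. if \<sigma> e \<in> e then 1/2 else 0)"
    unfolding random_orientation_def
    by (subst pmf_Pi[OF finite_E]) (auto simp: pmf_of_edge intro!: prod.cong)
  also have "\<dots> = (if \<sigma> \<in> \<Omega> then (1/2) ^ card E else 0)"
  proof (cases "\<sigma> \<in> \<Omega>")
    case False
    with True obtain e where "e \<in> E" "\<sigma> e \<notin> e" by (auto simp: in_orientations_iff)
    hence "(\<Prod>e\<in>E. if \<sigma> e \<in> e then 1/2 else 0) = (0::real)"
      using finite_E by (intro prod_zero) auto
    thus ?thesis using False by simp
  qed (simp add: in_orientations_iff)
  finally show ?thesis .
qed

lemma set_random_orientation: "set_pmf (random_orientation E) = \<Omega>"
  using pmf_random_orientation by (auto simp: set_pmf_eq)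

lemma expect_pop_pop:
  assumes "\<sigma> \<in> \<Omega>"
  shows "expect (pop E \<sigma> a) (\<lambda>\<sigma>'. expect (pop E \<sigma>' b) g) =
    expect (bind_pmf (pop E \<sigma> a) (\<lambda>\<sigma>'. pop E \<sigma>' b)) g"
  by (rule expect_bind_finite[symmetric]) (use assms finite_set_pop set_pop_subset in auto)

section \<open>The order of popping is irrelevant\<close>

definition sinks :: "('a set \<Rightarrow> 'a) \<Rightarrow> 'a set" where
  "sinks \<sigma> = {x\<in>V. is_sink E \<sigma> x}"

lemma has_sink_iff_sinks: "has_sink V E \<sigma> \<longleftrightarrow> sinks \<sigma> \<noteq> {}"
  by (auto simp: has_sink_def sinks_def)

definition sink_rule :: "(('a set \<Rightarrow> 'a) \<Rightarrow> 'a) \<Rightarrow> bool" where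
  "sink_rule f \<longleftrightarrow> (\<forall>\<sigma>. has_sink V E \<sigma> \<longrightarrow> f \<sigma> \<in> V \<and> is_sink E \<sigma> (f \<sigma>))"

lemma sink_rule_sink:
  "sink_rule f \<Longrightarrow> has_sink V E \<sigma> \<Longrightarrow> f \<sigma> \<in> V \<and> is_sink E \<sigma> (f \<sigma>)"
  by (simp add: sink_rule_def)

text \<open>Distinct sinks are never adjacent.\<close>

lemma sink_persists:
  assumes "\<sigma> \<in> \<Omega>" "is_sink E \<sigma> w" "is_sink E \<sigma> v" "v \<noteq> w" "\<sigma>' \<in> set_pmf (pop E \<sigma> v)"
  shows "is_sink E \<sigma>' w"
  unfolding is_sink_def
proof (intro ballI impI)
  fix e assume e: "e \<in> E" "w \<in> e"
  hence "\<sigma> e = w" using assms(2) by (simp add: is_sink_def)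
  hence "v \<notin> e" using assms(3,4) e by (auto simp: is_sink_def)
  thus "\<sigma>' e = w"
    using assms(1,5) e \<open>\<sigma> e = w\<close> by (auto simp: set_pop agrees_off_def)
qed

fun run_value :: "(('a set \<Rightarrow> 'a) \<Rightarrow> 'a) \<Rightarrow> ('a \<Rightarrow> real) \<Rightarrow> (('a set \<Rightarrow> 'a) \<Rightarrow> real \<Rightarrow> real)
    \<Rightarrow> nat \<Rightarrow> ('a set \<Rightarrow> 'a) \<Rightarrow> real \<Rightarrow> real" where
  "run_value f c \<phi> 0 \<sigma> a = \<phi> \<sigma> a"
| "run_value f c \<phi> (Suc k) \<sigma> a = (if has_sink V E \<sigma>
     then expect (pop E \<sigma> (f \<sigma>)) (\<lambda>\<sigma>'. run_value f c \<phi> k \<sigma>' (a + c (f \<sigma>))) else \<phi> \<sigma> a)"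

lemma run_value_sink_free: "\<not> has_sink V E \<sigma> \<Longrightarrow> run_value f c \<phi> k \<sigma> a = \<phi> \<sigma> a"
  by (cases k) auto

lemma expect_pop_payoff_zero:
  assumes \<phi>: "\<And>\<sigma> a. has_sink V E \<sigma> \<Longrightarrow> \<phi> \<sigma> a = 0"
    and \<sigma>: "\<sigma> \<in> \<Omega>" "is_sink E \<sigma> v" "w \<in> V" "is_sink E \<sigma> w" "v \<noteq> w"
  shows "expect (pop E \<sigma> v) (\<lambda>\<sigma>'. \<phi> \<sigma>' b) = 0"
proof -
  have "expect (pop E \<sigma> v) (\<lambda>\<sigma>'. \<phi> \<sigma>' b) = expect (pop E \<sigma> v) (\<lambda>_. 0)"
  proof (rule expect_cong)
    fix \<sigma>' assume "\<sigma>' \<in> set_pmf (pop E \<sigma> v)"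
    hence "is_sink E \<sigma>' w" using sink_persists \<sigma> by blast
    thus "\<phi> \<sigma>' b = 0" using \<sigma>(3) \<phi> by (auto simp: has_sink_def)
  qed
  thus ?thesis by simp
qed

text \<open>When the payoff vanishes on orientations with a sink, the first pop may be made at
  any sink \<open>w\<close> instead of the one chosen by \<open>f\<close>: the induction step swaps the first two
  pops, which commute.\<close>

lemma run_value_pop_any_sink:
  assumes f: "sink_rule f" and \<phi>: "\<And>\<sigma> a. has_sink V E \<sigma> \<Longrightarrow> \<phi> \<sigma> a = 0"
  shows "\<sigma> \<in> \<Omega> \<Longrightarrow> w \<in> V \<Longrightarrow> is_sink E \<sigma> w \<Longrightarrow>
    run_value f c \<phi> (Suc k) \<sigma> a = expect (pop E \<sigma> w) (\<lambda>\<sigma>'. run_value f c \<phi> k \<sigma>' (a + c w))"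
proof (induction k arbitrary: \<sigma> a w)
  case 0
  have hs: "has_sink V E \<sigma>" using 0 by (auto simp: has_sink_def)
  hence fs: "f \<sigma> \<in> V" "is_sink E \<sigma> (f \<sigma>)" using f sink_rule_sink by blast+
  show ?case
  proof (cases "f \<sigma> = w")
    case False
    have "expect (pop E \<sigma> (f \<sigma>)) (\<lambda>\<sigma>'. \<phi> \<sigma>' (a + c (f \<sigma>))) = 0"
      using expect_pop_payoff_zero[where \<phi> = \<phi>, OF \<phi> 0(1) fs(2) 0(2,3)] False by simp
    moreover have "expect (pop E \<sigma> w) (\<lambda>\<sigma>'. \<phi> \<sigma>' (a + c w)) = 0"
      using expect_pop_payoff_zero[where \<phi> = \<phi>, OF \<phi> 0(1,3) fs] False by simp
    ultimately show ?thesis using hs by simp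
  qed (use hs in simp)
next
  case (Suc k)
  have hs: "has_sink V E \<sigma>" using Suc by (auto simp: has_sink_def)
  hence fs: "f \<sigma> \<in> V" "is_sink E \<sigma> (f \<sigma>)" using f sink_rule_sink by blast+
  show ?case
  proof (cases "f \<sigma> = w")
    case False
    let ?g = "\<lambda>\<sigma>2. run_value f c \<phi> k \<sigma>2 (a + c (f \<sigma>) + c w)"
    have "run_value f c \<phi> (Suc (Suc k)) \<sigma> a =
        expect (pop E \<sigma> (f \<sigma>)) (\<lambda>\<sigma>1. run_value f c \<phi> (Suc k) \<sigma>1 (a + c (f \<sigma>)))"
      using hs by simp
    also have "\<dots> = expect (pop E \<sigma> (f \<sigma>)) (\<lambda>\<sigma>1. expect (pop E \<sigma>1 w) ?g)"
    proof (rule expect_cong)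
      fix \<sigma>1 assume s1: "\<sigma>1 \<in> set_pmf (pop E \<sigma> (f \<sigma>))"
      have "is_sink E \<sigma>1 w" using sink_persists[OF Suc(2) Suc(4) fs(2)] False s1 by blast
      thus "run_value f c \<phi> (Suc k) \<sigma>1 (a + c (f \<sigma>)) = expect (pop E \<sigma>1 w) ?g"
        by (rule Suc.IH[OF set_pop_subset[OF Suc(2) s1] Suc(3)])
    qed
    also have "\<dots> = expect (pop E \<sigma> w) (\<lambda>\<sigma>1. expect (pop E \<sigma>1 (f \<sigma>)) ?g)"
      by (simp add: expect_pop_pop[OF Suc(2)] pop_commute[OF finite_E])
    also have "\<dots> = expect (pop E \<sigma> w) (\<lambda>\<sigma>1. run_value f c \<phi> (Suc k) \<sigma>1 (a + c w))"
    proof (rule expect_cong)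
      fix \<sigma>1 assume s1: "\<sigma>1 \<in> set_pmf (pop E \<sigma> w)"
      have "is_sink E \<sigma>1 (f \<sigma>)" using sink_persists[OF Suc(2) fs(2) Suc(4)] False s1 by blast
      thus "expect (pop E \<sigma>1 (f \<sigma>)) ?g = run_value f c \<phi> (Suc k) \<sigma>1 (a + c w)"
        using Suc.IH[OF set_pop_subset[OF Suc(2) s1] fs(1)] by (simp add: ac_simps)
    qed
    finally show ?thesis .
  qed (use hs in simp)
qed

definition hist_sink_rule :: "(('a set \<Rightarrow> 'a) list \<Rightarrow> 'a) \<Rightarrow> bool" where
  "hist_sink_rule sel \<longleftrightarrow> (\<forall>h. has_sink V E (hd h) \<longrightarrow> sel h \<in> V \<and> is_sink E (hd h) (sel h))"

definition hist_cost :: "(('a set \<Rightarrow> 'a) list \<Rightarrow> 'a) \<Rightarrow> ('a \<Rightarrow> real) \<Rightarrow> ('a set \<Rightarrow> 'a) list \<Rightarrow> real" where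
  "hist_cost sel c h = (\<Sum>i\<in>{1..<length h}. c (sel (drop i h)))"

lemma hist_cost_Cons: "h \<noteq> [] \<Longrightarrow> hist_cost sel c (\<sigma> # h) = c (sel h) + hist_cost sel c h"
  by (cases h) (simp_all add: hist_cost_def sum.atLeast_Suc_lessThan sum.shift_bounds_Suc_ivl
      del: sum.op_ivl_Suc)

lemma hist_cost_nonneg: "(\<And>x. 0 \<le> c x) \<Longrightarrow> 0 \<le> hist_cost sel c h"
  unfolding hist_cost_def by (rule sum_nonneg) auto

definition wf_hist :: "('a set \<Rightarrow> 'a) list \<Rightarrow> bool" where
  "wf_hist h \<longleftrightarrow> h \<noteq> [] \<and> hd h \<in> \<Omega> \<and> (\<forall>i\<in>{1..<length h}. has_sink V E (hd (drop i h)))"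

lemma wf_hist_sp_step:
  assumes "wf_hist h" "h' \<in> set_pmf (sp_step V E sel h)"
  shows "wf_hist h'"
proof (cases "has_sink V E (hd h)")
  case True
  then obtain \<sigma>' where \<sigma>': "\<sigma>' \<in> set_pmf (pop E (hd h) (sel h))" "h' = \<sigma>' # h"
    using assms(2) by (auto simp: sp_step_def)
  have "has_sink V E (hd (drop i (\<sigma>' # h)))" if "i \<in> {1..<length (\<sigma>' # h)}" for i
  proof (cases i)
    case (Suc j)
    thus ?thesis using True assms(1) that by (cases j) (auto simp: wf_hist_def)
  qed (use that in simp)
  thus ?thesis using \<sigma>' set_pop_subset assms(1) by (auto simp: wf_hist_def)
qed (use assms in \<open>simp add: sp_step_def\<close>)

lemma finite_set_sp_step: "wf_hist h \<Longrightarrow> finite (set_pmf (sp_step V E sel h))"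
  using finite_set_pop by (auto simp: sp_step_def wf_hist_def)

lemma wf_hist_sp_hist: "h \<in> set_pmf (sp_hist V E sel k) \<Longrightarrow> wf_hist h"
proof (induction k arbitrary: h)
  case 0 thus ?case by (auto simp: set_random_orientation wf_hist_def)
next
  case (Suc k) thus ?case using wf_hist_sp_step by auto
qed

lemma finite_set_sp_hist: "finite (set_pmf (sp_hist V E sel k))"
  by (induction k) (auto simp: set_random_orientation finite_orientations
      intro: finite_set_sp_step wf_hist_sp_hist)

lemma expect_sp_hist_run_value:
  assumes f: "sink_rule f" and \<phi>: "\<And>\<sigma> a. has_sink V E \<sigma> \<Longrightarrow> \<phi> \<sigma> a = 0"
    and sel: "hist_sink_rule sel"
  shows "expect (sp_hist V E sel j) (\<lambda>h. run_value f c \<phi> k (hd h) (hist_cost sel c h)) =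
         expect (random_orientation E) (\<lambda>\<sigma>. run_value f c \<phi> (j + k) \<sigma> 0)"
proof (induction j arbitrary: k)
  case (Suc j)
  have step: "expect (sp_step V E sel h) (\<lambda>h. run_value f c \<phi> k (hd h) (hist_cost sel c h)) =
      run_value f c \<phi> (Suc k) (hd h) (hist_cost sel c h)" if h: "wf_hist h" for h
  proof (cases "has_sink V E (hd h)")
    case True
    have "h \<noteq> []" "hd h \<in> \<Omega>" using h by (auto simp: wf_hist_def)
    moreover have "sel h \<in> V" "is_sink E (hd h) (sel h)"
      using True sel by (auto simp: hist_sink_rule_def)
    ultimately have "run_value f c \<phi> (Suc k) (hd h) (hist_cost sel c h) =
        expect (pop E (hd h) (sel h)) (\<lambda>\<sigma>'. run_value f c \<phi> k \<sigma>' (hist_cost sel c h + c (sel h)))"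
      by (intro run_value_pop_any_sink[OF f \<phi>])
    thus ?thesis using True \<open>h \<noteq> []\<close> by (simp add: sp_step_def hist_cost_Cons add.commute)
  qed (simp add: sp_step_def run_value_sink_free)
  have "expect (sp_hist V E sel (Suc j)) (\<lambda>h. run_value f c \<phi> k (hd h) (hist_cost sel c h)) =
      expect (sp_hist V E sel j) (\<lambda>h. run_value f c \<phi> (Suc k) (hd h) (hist_cost sel c h))"
    using finite_set_sp_hist finite_set_sp_step wf_hist_sp_hist step
    by (simp only: sp_hist.simps, subst expect_bind_finite) (auto intro!: expect_cong)
  thus ?case using Suc.IH[of "Suc k"] by simp
qed (simp add: hist_cost_def)

section \<open>Termination\<close>

fun sf_prob :: "(('a set \<Rightarrow> 'a) \<Rightarrow> 'a) \<Rightarrow> nat \<Rightarrow> ('a set \<Rightarrow> 'a) \<Rightarrow> real" where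
  "sf_prob f 0 \<sigma> = (if has_sink V E \<sigma> then 0 else 1)"
| "sf_prob f (Suc k) \<sigma> = (if has_sink V E \<sigma> then expect (pop E \<sigma> (f \<sigma>)) (sf_prob f k) else 1)"

lemma sf_prob_sink_free: "\<not> has_sink V E \<sigma> \<Longrightarrow> sf_prob f k \<sigma> = 1"
  by (cases k) auto

lemma run_value_eq_sf_prob:
  "run_value f c (\<lambda>\<sigma> a. if has_sink V E \<sigma> then 0 else 1) k \<sigma> a = sf_prob f k \<sigma>"
  by (induction k arbitrary: \<sigma> a) auto

lemma sf_prob_bounds: "\<sigma> \<in> \<Omega> \<Longrightarrow> 0 \<le> sf_prob f k \<sigma> \<and> sf_prob f k \<sigma> \<le> 1"
proof (induction k arbitrary: \<sigma>)
  case (Suc k)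
  have "0 \<le> expect (pop E \<sigma> (f \<sigma>)) (sf_prob f k)"
    by (rule expect_nonneg) (use Suc set_pop_subset in blast)
  moreover have "expect (pop E \<sigma> (f \<sigma>)) (sf_prob f k) \<le> expect (pop E \<sigma> (f \<sigma>)) (\<lambda>_. 1)"
    by (rule expect_mono) (use Suc set_pop_subset finite_set_pop in blast)+
  ultimately show ?case by simp
qed simp

definition edge_dist :: "('a set \<Rightarrow> 'a) \<Rightarrow> ('a set \<Rightarrow> 'a) \<Rightarrow> nat" where
  "edge_dist \<tau> \<sigma> = card {e\<in>E. \<sigma> e \<noteq> \<tau> e}"

lemma edge_dist_le: "edge_dist \<tau> \<sigma> \<le> card E"
  unfolding edge_dist_def by (rule card_mono[OF finite_E]) auto

text \<open>A sink \<open>v\<close> of \<open>\<sigma>\<close> is not a sink of the sink-free \<open>\<tau>\<close>, so re-orienting the edges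
  at \<open>v\<close> as in \<open>\<tau>\<close> brings \<open>\<sigma>\<close> strictly closer to \<open>\<tau>\<close>.\<close>

lemma pop_towards_sink_free:
  assumes \<sigma>: "\<sigma> \<in> \<Omega>" and v: "v \<in> V" "is_sink E \<sigma> v"
    and \<tau>: "\<tau> \<in> sink_free_orientations V E"
  obtains \<sigma>' where "\<sigma>' \<in> \<Omega>" "agrees_off v \<sigma> \<sigma>'" "edge_dist \<tau> \<sigma>' < edge_dist \<tau> \<sigma>"
proof
  have \<tau>\<Omega>: "\<tau> \<in> \<Omega>" and "\<not> is_sink E \<tau> v"
    using \<tau> v(1) by (auto simp: sink_free_orientations_def has_sink_def)
  then obtain e0 where e0: "e0 \<in> E" "v \<in> e0" "\<tau> e0 \<noteq> v" by (auto simp: is_sink_def)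
  define \<sigma>' where "\<sigma>' = (\<lambda>e. if e \<in> E then (if v \<in> e then \<tau> e else \<sigma> e) else undefined)"
  show "\<sigma>' \<in> \<Omega>" using \<sigma> \<tau>\<Omega> by (auto simp: in_orientations_iff \<sigma>'_def)
  show "agrees_off v \<sigma> \<sigma>'" by (auto simp: agrees_off_def \<sigma>'_def)
  have e0_diff: "e0 \<in> {e\<in>E. \<sigma> e \<noteq> \<tau> e}" using e0 v(2) by (auto simp: is_sink_def)
  have "edge_dist \<tau> \<sigma>' \<le> card ({e\<in>E. \<sigma> e \<noteq> \<tau> e} - {e0})"
    unfolding edge_dist_def using finite_E e0 by (intro card_mono) (auto simp: \<sigma>'_def)
  also have "\<dots> < edge_dist \<tau> \<sigma>"
    unfolding edge_dist_def using finite_E e0_diff by (intro card_Diff1_less) auto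
  finally show "edge_dist \<tau> \<sigma>' < edge_dist \<tau> \<sigma>" .
qed

lemma sf_prob_lower:
  assumes f: "sink_rule f" and \<tau>: "\<tau> \<in> sink_free_orientations V E"
  shows "\<sigma> \<in> \<Omega> \<Longrightarrow> edge_dist \<tau> \<sigma> \<le> k \<Longrightarrow> ((1/2) ^ card E) ^ edge_dist \<tau> \<sigma> \<le> sf_prob f k \<sigma>"
proof (induction "edge_dist \<tau> \<sigma>" arbitrary: \<sigma> k rule: less_induct)
  case less
  let ?q = "(1/2::real) ^ card E"
  show ?case
  proof (cases "has_sink V E \<sigma>")
    case False
    thus ?thesis by (simp add: sf_prob_sink_free power_le_one)
  next
    case True
    define v where "v = f \<sigma>"
    have v: "v \<in> V" "is_sink E \<sigma> v" using f True sink_rule_sink by (auto simp: v_def)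
    obtain \<sigma>' where \<sigma>': "\<sigma>' \<in> \<Omega>" "agrees_off v \<sigma> \<sigma>'" "edge_dist \<tau> \<sigma>' < edge_dist \<tau> \<sigma>"
      using pop_towards_sink_free[OF less(2) v \<tau>] .
    obtain k' where k: "k = Suc k'" using less(3) \<sigma>'(3) by (cases k) auto
    have "?q ^ edge_dist \<tau> \<sigma> = ?q * ?q ^ (edge_dist \<tau> \<sigma> - 1)"
      using \<sigma>'(3) by (cases "edge_dist \<tau> \<sigma>") auto
    also have "\<dots> \<le> ?q * ?q ^ edge_dist \<tau> \<sigma>'"
      using \<sigma>'(3) by (intro mult_left_mono power_decreasing) (auto simp: power_le_one)
    also have "\<dots> \<le> (1/2) ^ degree E v * sf_prob f k' \<sigma>'"
    proof (rule mult_mono)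
      show "?q \<le> (1/2) ^ degree E v"
        unfolding degree_def by (intro power_decreasing card_mono[OF finite_E]) auto
      show "?q ^ edge_dist \<tau> \<sigma>' \<le> sf_prob f k' \<sigma>'"
        using less(1)[OF \<sigma>'(3) \<sigma>'(1)] less(3) \<sigma>'(3) k by simp
    qed (use sf_prob_bounds[OF \<sigma>'(1)] in auto)
    also have "\<dots> \<le> (\<Sum>\<sigma>''\<in>{\<sigma>''\<in>\<Omega>. agrees_off v \<sigma> \<sigma>''}. (1/2) ^ degree E v * sf_prob f k' \<sigma>'')"
      by (rule member_le_sum) (use \<sigma>' sf_prob_bounds finite_orientations in auto)
    also have "\<dots> = sf_prob f k \<sigma>"
      using True k by (simp add: v_def expect_pop[OF less(2)])
    finally show ?thesis .
  qed
qed

lemma sf_prob_add: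
  assumes "\<forall>\<sigma>\<in>\<Omega>. 1 - sf_prob f m \<sigma> \<le> r" "0 \<le> r"
  shows "\<sigma> \<in> \<Omega> \<Longrightarrow> 1 - sf_prob f (k + m) \<sigma> \<le> r * (1 - sf_prob f k \<sigma>)"
proof (induction k arbitrary: \<sigma>)
  case 0 thus ?case using assms by (cases "has_sink V E \<sigma>") (auto simp: sf_prob_sink_free)
next
  case (Suc k)
  show ?case
  proof (cases "has_sink V E \<sigma>")
    case True
    let ?M = "pop E \<sigma> (f \<sigma>)"
    have fin: "finite (set_pmf ?M)" using finite_set_pop Suc(2) by blast
    have "1 - sf_prob f (Suc k + m) \<sigma> = expect ?M (\<lambda>x. 1 - sf_prob f (k + m) x)"
      using True by (simp add: expect_diff[OF fin])
    also have "\<dots> \<le> expect ?M (\<lambda>x. r * (1 - sf_prob f k x))"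
      by (rule expect_mono[OF fin]) (use Suc.IH set_pop_subset Suc(2) in blast)
    also have "\<dots> = r * (1 - sf_prob f (Suc k) \<sigma>)"
      using True by (simp add: expect_diff[OF fin])
    finally show ?thesis .
  qed (simp add: sf_prob_sink_free)
qed

text \<open>A uniform bound on the probability of still having a sink after \<open>k\<close> pops: by
  \<open>sf_prob_lower\<close>, each block of \<open>card E + 1\<close> pops succeeds with probability at least
  \<open>2 ^ - (card E)\<^sup>2\<close>.\<close>

definition stall_bound :: "nat \<Rightarrow> real" where
  "stall_bound k = (1 - ((1/2) ^ card E) ^ card E) ^ (k div (card E + 1))"

lemma stall_bound_tendsto_zero: "stall_bound \<longlonglongrightarrow> 0"
  unfolding stall_bound_def by (rule tendsto_power_div_zero) (auto simp: power_le_one)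

lemma sf_prob_ge_stall_bound:
  assumes f: "sink_rule f" and SF: "sink_free_orientations V E \<noteq> {}" and \<sigma>: "\<sigma> \<in> \<Omega>"
  shows "1 - stall_bound k \<le> sf_prob f k \<sigma>"
proof -
  obtain \<tau> where \<tau>: "\<tau> \<in> sink_free_orientations V E" using SF by blast
  define N where "N = card E + 1"
  define d :: real where "d = ((1/2) ^ card E) ^ card E"
  have d: "0 < d" "d \<le> 1" by (auto simp: d_def power_le_one)
  have block: "\<forall>\<sigma>\<in>\<Omega>. 1 - sf_prob f N \<sigma> \<le> 1 - d"
  proof
    fix \<sigma> assume \<sigma>: "\<sigma> \<in> \<Omega>"
    have "((1/2) ^ card E) ^ edge_dist \<tau> \<sigma> \<le> sf_prob f N \<sigma>"
      using sf_prob_lower[OF f \<tau> \<sigma>, of N] edge_dist_le[of \<tau> \<sigma>] by (simp add: N_def del: sf_prob.simps)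
    moreover have "d \<le> ((1/2) ^ card E) ^ edge_dist \<tau> \<sigma>"
      unfolding d_def by (rule power_decreasing[OF edge_dist_le]) (auto simp: power_le_one)
    ultimately show "1 - sf_prob f N \<sigma> \<le> 1 - d" by linarith
  qed
  have one: "\<forall>\<sigma>\<in>\<Omega>. 1 - sf_prob f i \<sigma> \<le> 1" for i
    using sf_prob_bounds by force
  have blocks: "\<sigma> \<in> \<Omega> \<Longrightarrow> 1 - sf_prob f (n * N) \<sigma> \<le> (1 - d) ^ n" for n \<sigma>
  proof (induction n arbitrary: \<sigma>)
    case 0 thus ?case by (cases "has_sink V E \<sigma>") auto
  next
    case (Suc n)
    have "1 - sf_prob f (n * N + N) \<sigma> \<le> (1 - d) * (1 - sf_prob f (n * N) \<sigma>)"
      by (rule sf_prob_add[OF block]) (use d Suc(2) in auto)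
    also have "\<dots> \<le> (1 - d) * (1 - d) ^ n"
      by (rule mult_left_mono) (use Suc d in auto)
    finally show ?case by (simp add: add.commute)
  qed
  have "1 - sf_prob f k \<sigma> = 1 - sf_prob f (k div N * N + k mod N) \<sigma>" by simp
  also have "\<dots> \<le> 1 * (1 - sf_prob f (k div N * N) \<sigma>)"
    by (rule sf_prob_add[OF one _ \<sigma>]) simp
  also have "\<dots> \<le> (1 - d) ^ (k div N)" using blocks[OF \<sigma>] by simp
  finally show ?thesis unfolding stall_bound_def N_def d_def by linarith
qed

section \<open>The law of the orientation under a fixed sink rule\<close>

definition rule_step :: "(('a set \<Rightarrow> 'a) \<Rightarrow> 'a) \<Rightarrow> ('a set \<Rightarrow> 'a) \<Rightarrow> ('a set \<Rightarrow> 'a) pmf" where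
  "rule_step f \<sigma> = (if has_sink V E \<sigma> then pop E \<sigma> (f \<sigma>) else return_pmf \<sigma>)"

fun rule_law :: "(('a set \<Rightarrow> 'a) \<Rightarrow> 'a) \<Rightarrow> nat \<Rightarrow> ('a set \<Rightarrow> 'a) pmf" where
  "rule_law f 0 = random_orientation E"
| "rule_law f (Suc s) = bind_pmf (rule_law f s) (rule_step f)"

lemma set_rule_law: "set_pmf (rule_law f s) \<subseteq> \<Omega>"
proof (induction s)
  case (Suc s)
  show ?case
  proof
    fix \<sigma>' assume "\<sigma>' \<in> set_pmf (rule_law f (Suc s))"
    then obtain \<sigma> where "\<sigma> \<in> set_pmf (rule_law f s)" "\<sigma>' \<in> set_pmf (rule_step f \<sigma>)" by auto
    thus "\<sigma>' \<in> \<Omega>" using Suc set_pop_subset by (auto simp: rule_step_def split: if_splits)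
  qed
qed (simp add: set_random_orientation)

lemma finite_set_rule_law: "finite (set_pmf (rule_law f s))"
  using set_rule_law finite_orientations finite_subset by blast

lemma expect_rule_law_Suc:
  "expect (rule_law f (Suc s)) g = expect (rule_law f s) (\<lambda>\<sigma>. expect (rule_step f \<sigma>) g)"
  unfolding rule_law.simps
  by (rule expect_bind_finite)
    (use finite_set_rule_law finite_set_pop subsetD[OF set_rule_law] in \<open>auto simp: rule_step_def\<close>)

lemma expect_rule_law_run_value:
  assumes "\<And>\<sigma> a. has_sink V E \<sigma> \<Longrightarrow> \<phi> \<sigma> a = 0"
  shows "expect (rule_law f s) (\<lambda>\<sigma>. run_value f (\<lambda>_. 0) \<phi> n \<sigma> 0) =
    expect (rule_law f (s + n)) (\<lambda>\<sigma>. \<phi> \<sigma> 0)"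
proof (induction n arbitrary: s)
  case (Suc n)
  have "expect (rule_law f s) (\<lambda>\<sigma>. run_value f (\<lambda>_. 0) \<phi> (Suc n) \<sigma> 0) =
      expect (rule_law f (Suc s)) (\<lambda>\<sigma>. run_value f (\<lambda>_. 0) \<phi> n \<sigma> 0)"
    unfolding expect_rule_law_Suc
    by (rule expect_cong) (auto simp: rule_step_def run_value_sink_free assms)
  thus ?case using Suc.IH[of "Suc s"] by simp
qed simp

definition make_sink :: "'a \<Rightarrow> ('a set \<Rightarrow> 'a) \<Rightarrow> ('a set \<Rightarrow> 'a)" where
  "make_sink v \<sigma> = (\<lambda>e. if e \<in> E then (if v \<in> e then v else \<sigma> e) else undefined)"

lemma make_sink_in_orientations: "\<sigma> \<in> \<Omega> \<Longrightarrow> make_sink v \<sigma> \<in> \<Omega>"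
  by (auto simp: in_orientations_iff make_sink_def)

lemma is_sink_make_sink: "is_sink E (make_sink v \<sigma>) v"
  by (auto simp: is_sink_def make_sink_def)

definition nbhd :: "'a \<Rightarrow> 'a set" where
  "nbhd v = {x. \<exists>e\<in>E. v \<in> e \<and> x \<in> e}"

lemma sinks_make_sink:
  assumes "v \<in> V"
  shows "sinks (make_sink v \<sigma>) = insert v (sinks \<sigma> - nbhd v)"
proof -
  have *: "is_sink E (make_sink v \<sigma>) x \<longleftrightarrow> is_sink E \<sigma> x \<and> x \<notin> nbhd v" if "x \<noteq> v" for x
  proof
    assume s: "is_sink E (make_sink v \<sigma>) x"
    have "x \<notin> nbhd v"
      using s that by (force simp: is_sink_def nbhd_def make_sink_def)
    moreover from this have "is_sink E \<sigma> x"
      using s by (force simp: is_sink_def nbhd_def make_sink_def)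
    ultimately show "is_sink E \<sigma> x \<and> x \<notin> nbhd v" by simp
  next
    assume "is_sink E \<sigma> x \<and> x \<notin> nbhd v"
    thus "is_sink E (make_sink v \<sigma>) x" by (force simp: is_sink_def nbhd_def make_sink_def)
  qed
  show ?thesis
  proof (intro set_eqI)
    fix x
    show "x \<in> sinks (make_sink v \<sigma>) \<longleftrightarrow> x \<in> insert v (sinks \<sigma> - nbhd v)"
      by (cases "x = v") (use * assms is_sink_make_sink[of v \<sigma>] in \<open>auto simp: sinks_def\<close>)
  qed
qed

lemma pop_source_iff:
  assumes f: "sink_rule f" and \<sigma>: "\<sigma> \<in> \<Omega>" and v: "v \<in> V"
  shows "(has_sink V E \<sigma> \<and> f \<sigma> = v \<and> agrees_off v \<sigma> \<sigma>') \<longleftrightarrow>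
    (\<sigma> = make_sink v \<sigma>' \<and> f (make_sink v \<sigma>') = v)"
proof
  assume *: "has_sink V E \<sigma> \<and> f \<sigma> = v \<and> agrees_off v \<sigma> \<sigma>'"
  hence "is_sink E \<sigma> v" using f sink_rule_sink by blast
  hence "\<sigma> = make_sink v \<sigma>'"
    using * \<sigma> by (auto simp: in_orientations_iff is_sink_def agrees_off_def make_sink_def)
  thus "\<sigma> = make_sink v \<sigma>' \<and> f (make_sink v \<sigma>') = v" using * by simp
next
  assume "\<sigma> = make_sink v \<sigma>' \<and> f (make_sink v \<sigma>') = v"
  thus "has_sink V E \<sigma> \<and> f \<sigma> = v \<and> agrees_off v \<sigma> \<sigma>'"
    using v is_sink_make_sink by (auto simp: has_sink_def agrees_off_def make_sink_def)
qed

text \<open>The probability of entering \<open>\<sigma>'\<close> by the pop in step \<open>s + 1\<close>.\<close>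

definition inflow :: "(('a set \<Rightarrow> 'a) \<Rightarrow> 'a) \<Rightarrow> nat \<Rightarrow> ('a set \<Rightarrow> 'a) \<Rightarrow> real" where
  "inflow f s \<sigma>' = (\<Sum>v\<in>V. if f (make_sink v \<sigma>') = v
     then (1/2) ^ degree E v * pmf (rule_law f s) (make_sink v \<sigma>') else 0)"

lemma sum_pop_sources:
  assumes f: "sink_rule f" and \<sigma>': "\<sigma>' \<in> \<Omega>"
  shows "(\<Sum>\<sigma>\<in>\<Omega>. if has_sink V E \<sigma> \<and> agrees_off (f \<sigma>) \<sigma> \<sigma>'
      then pmf (rule_law f s) \<sigma> * (1/2) ^ degree E (f \<sigma>) else 0) = inflow f s \<sigma>'"
proof -
  let ?h = "\<lambda>\<sigma>. pmf (rule_law f s) \<sigma> * (1/2) ^ degree E (f \<sigma>)"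
  have "(\<Sum>\<sigma>\<in>\<Omega>. if has_sink V E \<sigma> \<and> agrees_off (f \<sigma>) \<sigma> \<sigma>' then ?h \<sigma> else 0) =
      (\<Sum>\<sigma>\<in>\<Omega>. \<Sum>v\<in>V. if v = f \<sigma> then
        (if has_sink V E \<sigma> \<and> agrees_off v \<sigma> \<sigma>' then ?h \<sigma> else 0) else 0)"
  proof (intro sum.cong refl)
    fix \<sigma>
    show "(if has_sink V E \<sigma> \<and> agrees_off (f \<sigma>) \<sigma> \<sigma>' then ?h \<sigma> else 0) =
        (\<Sum>v\<in>V. if v = f \<sigma> then (if has_sink V E \<sigma> \<and> agrees_off v \<sigma> \<sigma>' then ?h \<sigma> else 0) else 0)"
      using f sink_rule_sink[of f \<sigma>] finite_V by (cases "has_sink V E \<sigma>") simp_all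
  qed
  also have "\<dots> = (\<Sum>v\<in>V. \<Sum>\<sigma>\<in>\<Omega>. if \<sigma> = make_sink v \<sigma>' then
      (if f (make_sink v \<sigma>') = v then ?h \<sigma> else 0) else 0)"
  proof (subst sum.swap, intro sum.cong refl)
    fix v \<sigma> assume "v \<in> V" "\<sigma> \<in> \<Omega>"
    thus "(if v = f \<sigma> then (if has_sink V E \<sigma> \<and> agrees_off v \<sigma> \<sigma>' then ?h \<sigma> else 0) else 0) =
        (if \<sigma> = make_sink v \<sigma>' then (if f (make_sink v \<sigma>') = v then ?h \<sigma> else 0) else 0)"
      using pop_source_iff[OF f, of \<sigma> v \<sigma>'] by auto
  qed
  also have "\<dots> = inflow f s \<sigma>'"
    unfolding inflow_def using finite_orientations make_sink_in_orientations[OF \<sigma>']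
    by (intro sum.cong refl) auto
  finally show ?thesis .
qed

lemma pmf_rule_law_Suc:
  assumes f: "sink_rule f" and \<sigma>': "\<sigma>' \<in> \<Omega>"
  shows "pmf (rule_law f (Suc s)) \<sigma>' =
    (if has_sink V E \<sigma>' then 0 else pmf (rule_law f s) \<sigma>') + inflow f s \<sigma>'"
proof -
  let ?L = "rule_law f s"
  have "pmf (rule_law f (Suc s)) \<sigma>' = (\<Sum>\<sigma>\<in>\<Omega>. pmf ?L \<sigma> * pmf (rule_step f \<sigma>) \<sigma>')"
    unfolding rule_law.simps pmf_bind by (rule expect_finite_sum[OF finite_orientations set_rule_law])
  also have "\<dots> = (\<Sum>\<sigma>\<in>\<Omega>. (if \<sigma> = \<sigma>' then (if has_sink V E \<sigma>' then 0 else pmf ?L \<sigma>') else 0) +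
      (if has_sink V E \<sigma> \<and> agrees_off (f \<sigma>) \<sigma> \<sigma>' then pmf ?L \<sigma> * (1/2) ^ degree E (f \<sigma>) else 0))"
    using \<sigma>' by (intro sum.cong refl) (auto simp: rule_step_def pmf_pop indicator_def)
  also have "\<dots> = (if has_sink V E \<sigma>' then 0 else pmf ?L \<sigma>') + inflow f s \<sigma>'"
    using \<sigma>' finite_orientations by (simp add: sum.distrib sum_pop_sources[OF f \<sigma>'])
  finally show ?thesis .
qed

section \<open>Popping every sink other than a fixed vertex first\<close>

lemma sink_free_orientations_iff: "\<sigma> \<in> sink_free_orientations V E \<longleftrightarrow> \<sigma> \<in> \<Omega> \<and> sinks \<sigma> = {}"
  by (simp add: sink_free_orientations_def has_sink_iff_sinks)

lemma finite_sink_free_orientations: "finite (sink_free_orientations V E)"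
  using finite_orientations by (simp add: sink_free_orientations_def)

definition avoid_rule :: "'a \<Rightarrow> ('a set \<Rightarrow> 'a) \<Rightarrow> 'a" where
  "avoid_rule u \<sigma> = (if sinks \<sigma> - {u} \<noteq> {} then (SOME x. x \<in> sinks \<sigma> - {u}) else u)"

lemma avoid_rule_other: "sinks \<sigma> - {u} \<noteq> {} \<Longrightarrow> avoid_rule u \<sigma> \<in> sinks \<sigma> - {u}"
  using someI_ex[of "\<lambda>x. x \<in> sinks \<sigma> - {u}"] by (auto simp: avoid_rule_def)

lemma sink_rule_avoid_rule: "sink_rule (avoid_rule u)"
  unfolding sink_rule_def
proof (intro allI impI)
  fix \<sigma> assume "has_sink V E \<sigma>"
  hence "avoid_rule u \<sigma> \<in> sinks \<sigma>"
    using avoid_rule_other[of \<sigma> u] by (cases "sinks \<sigma> - {u} = {}") (auto simp: avoid_rule_def has_sink_iff_sinks)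
  thus "avoid_rule u \<sigma> \<in> V \<and> is_sink E \<sigma> (avoid_rule u \<sigma>)" by (simp add: sinks_def)
qed

definition sink_equiv :: "'a \<Rightarrow> ('a set \<Rightarrow> 'a) \<Rightarrow> ('a set \<Rightarrow> 'a) \<Rightarrow> bool" where
  "sink_equiv u \<sigma>1 \<sigma>2 \<longleftrightarrow>
    sinks \<sigma>1 = sinks \<sigma>2 \<or> (sinks \<sigma>1 - {u} = sinks \<sigma>2 - {u} \<and> sinks \<sigma>1 - {u} \<noteq> {})"

lemma sink_equiv_sinks_Diff: "sink_equiv u \<sigma>1 \<sigma>2 \<Longrightarrow> sinks \<sigma>1 - {u} = sinks \<sigma>2 - {u}"
  unfolding sink_equiv_def by (elim disjE conjE) simp_all

lemma sink_equiv_avoid_rule: "sink_equiv u \<sigma>1 \<sigma>2 \<Longrightarrow> avoid_rule u \<sigma>1 = avoid_rule u \<sigma>2"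
proof -
  assume "sink_equiv u \<sigma>1 \<sigma>2"
  hence "sinks \<sigma>1 - {u} = sinks \<sigma>2 - {u}" by (rule sink_equiv_sinks_Diff)
  thus ?thesis by (simp only: avoid_rule_def)
qed

lemma sink_equiv_has_sink: "sink_equiv u \<sigma>1 \<sigma>2 \<Longrightarrow> has_sink V E \<sigma>1 \<longleftrightarrow> has_sink V E \<sigma>2"
  unfolding sink_equiv_def has_sink_iff_sinks by (elim disjE conjE) auto

lemma sink_equiv_make_sink:
  assumes "v \<in> V" "sinks \<sigma>1 - {u} = sinks \<sigma>2 - {u}"
  shows "sink_equiv u (make_sink v \<sigma>1) (make_sink v \<sigma>2)"
proof (cases "v = u")
  case True
  have "insert u (S - nbhd u) = insert u ((S - {u}) - nbhd u)" for S by auto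
  hence "sinks (make_sink v \<sigma>1) = sinks (make_sink v \<sigma>2)"
    unfolding sinks_make_sink[OF assms(1)] using assms(2) True by metis
  thus ?thesis by (simp add: sink_equiv_def)
next
  case False
  have "insert v (S - nbhd v) - {u} = insert v ((S - {u}) - nbhd v)" for S
    using False by auto
  thus ?thesis unfolding sink_equiv_def sinks_make_sink[OF assms(1)] using assms(2) by simp
qed

lemma inflow_avoid_rule_cong:
  assumes law: "\<And>\<sigma>1 \<sigma>2. \<sigma>1 \<in> \<Omega> \<Longrightarrow> \<sigma>2 \<in> \<Omega> \<Longrightarrow> sink_equiv u \<sigma>1 \<sigma>2 \<Longrightarrow>
      pmf (rule_law (avoid_rule u) s) \<sigma>1 = pmf (rule_law (avoid_rule u) s) \<sigma>2"
    and \<sigma>: "\<sigma>1 \<in> \<Omega>" "\<sigma>2 \<in> \<Omega>" "sinks \<sigma>1 - {u} = sinks \<sigma>2 - {u}"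
  shows "inflow (avoid_rule u) s \<sigma>1 = inflow (avoid_rule u) s \<sigma>2"
  unfolding inflow_def
proof (intro sum.cong refl)
  fix v assume "v \<in> V"
  hence "sink_equiv u (make_sink v \<sigma>1) (make_sink v \<sigma>2)"
    using sink_equiv_make_sink \<sigma>(3) by blast
  thus "(if avoid_rule u (make_sink v \<sigma>1) = v
        then (1/2) ^ degree E v * pmf (rule_law (avoid_rule u) s) (make_sink v \<sigma>1) else 0) =
      (if avoid_rule u (make_sink v \<sigma>2) = v
        then (1/2) ^ degree E v * pmf (rule_law (avoid_rule u) s) (make_sink v \<sigma>2) else 0)"
    using law[OF make_sink_in_orientations[OF \<sigma>(1)] make_sink_in_orientations[OF \<sigma>(2)]]
      sink_equiv_avoid_rule by simp
qed

lemma pmf_avoid_law_sink_equiv: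
  "\<sigma>1 \<in> \<Omega> \<Longrightarrow> \<sigma>2 \<in> \<Omega> \<Longrightarrow> sink_equiv u \<sigma>1 \<sigma>2 \<Longrightarrow>
    pmf (rule_law (avoid_rule u) s) \<sigma>1 = pmf (rule_law (avoid_rule u) s) \<sigma>2"
proof (induction s arbitrary: \<sigma>1 \<sigma>2)
  case 0 thus ?case by (simp add: pmf_random_orientation)
next
  case (Suc s)
  have "sinks \<sigma>1 - {u} = sinks \<sigma>2 - {u}" using Suc.prems(3) by (rule sink_equiv_sinks_Diff)
  hence "inflow (avoid_rule u) s \<sigma>1 = inflow (avoid_rule u) s \<sigma>2"
    using inflow_avoid_rule_cong[OF Suc.IH] Suc.prems(1,2) by blast
  moreover have "pmf (rule_law (avoid_rule u) s) \<sigma>1 = pmf (rule_law (avoid_rule u) s) \<sigma>2"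
    by (rule Suc.IH[OF Suc.prems])
  ultimately show ?case
    using sink_equiv_has_sink[OF Suc.prems(3)]
    unfolding pmf_rule_law_Suc[OF sink_rule_avoid_rule Suc.prems(1)]
      pmf_rule_law_Suc[OF sink_rule_avoid_rule Suc.prems(2)] by simp
qed

text \<open>An orientation whose only sink is \<open>u\<close> has the same inflow as a sink-free one, which in
  addition keeps its own probability.\<close>

lemma pmf_avoid_law_single_sink:
  assumes \<sigma>0: "\<sigma>0 \<in> sink_free_orientations V E" and \<sigma>1: "\<sigma>1 \<in> \<Omega>" "sinks \<sigma>1 = {u}"
  shows "pmf (rule_law (avoid_rule u) (Suc s)) \<sigma>1 =
    pmf (rule_law (avoid_rule u) (Suc s)) \<sigma>0 - pmf (rule_law (avoid_rule u) s) \<sigma>0"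
proof -
  have \<sigma>0': "\<sigma>0 \<in> \<Omega>" "sinks \<sigma>0 = {}" using \<sigma>0 by (auto simp: sink_free_orientations_iff)
  have "inflow (avoid_rule u) s \<sigma>1 = inflow (avoid_rule u) s \<sigma>0"
    by (rule inflow_avoid_rule_cong[OF pmf_avoid_law_sink_equiv]) (use \<sigma>0' \<sigma>1 in simp_all)
  thus ?thesis using \<sigma>0' \<sigma>1
    unfolding pmf_rule_law_Suc[OF sink_rule_avoid_rule \<sigma>1(1)]
      pmf_rule_law_Suc[OF sink_rule_avoid_rule \<sigma>0'(1)] by (simp add: has_sink_iff_sinks)
qed

lemma sum_pmf_avoid_law_single_sink:
  assumes \<sigma>0: "\<sigma>0 \<in> sink_free_orientations V E" and \<sigma>1: "\<sigma>1 \<in> \<Omega>" "sinks \<sigma>1 = {u}"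
  shows "(\<Sum>t<Suc n. pmf (rule_law (avoid_rule u) t) \<sigma>1) = pmf (rule_law (avoid_rule u) n) \<sigma>0"
proof (induction n)
  case 0
  show ?case using \<sigma>0 \<sigma>1 by (simp add: pmf_random_orientation sink_free_orientations_def)
next
  case (Suc n)
  thus ?case using pmf_avoid_law_single_sink[OF assms, of n] by simp
qed

lemma card_mult_pmf_avoid_law_le:
  assumes "\<sigma>0 \<in> sink_free_orientations V E"
  shows "real (card (sink_free_orientations V E)) * pmf (rule_law (avoid_rule u) n) \<sigma>0 \<le> 1"
proof -
  let ?S = "sink_free_orientations V E"
  have "real (card ?S) * pmf (rule_law (avoid_rule u) n) \<sigma>0 = (\<Sum>\<tau>\<in>?S. pmf (rule_law (avoid_rule u) n) \<sigma>0)"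
    by simp
  also have "\<dots> = (\<Sum>\<tau>\<in>?S. pmf (rule_law (avoid_rule u) n) \<tau>)"
    using assms by (intro sum.cong refl pmf_avoid_law_sink_equiv)
      (auto simp: sink_free_orientations_iff sink_equiv_def)
  also have "\<dots> = measure_pmf.prob (rule_law (avoid_rule u) n) ?S"
    by (simp add: measure_measure_pmf_finite[OF finite_sink_free_orientations])
  finally show ?thesis by simp
qed

definition single_sink :: "'a \<Rightarrow> ('a set \<Rightarrow> 'a) set" where
  "single_sink u = {\<sigma>\<in>\<Omega>. sinks \<sigma> = {u}}"

lemma sum_pmf_avoid_law_single_sink_le:
  assumes SF: "sink_free_orientations V E \<noteq> {}"
  shows "(\<Sum>t<n. \<Sum>\<sigma>\<in>single_sink u. pmf (rule_law (avoid_rule u) t) \<sigma>) \<le>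
    real (card (single_sink u)) / real (card (sink_free_orientations V E))"
proof (cases n)
  case (Suc m)
  obtain \<sigma>0 where \<sigma>0: "\<sigma>0 \<in> sink_free_orientations V E" using SF by blast
  have "0 < card (sink_free_orientations V E)"
    using SF finite_sink_free_orientations by (simp add: card_gt_0_iff)
  moreover have "(\<Sum>t<n. \<Sum>\<sigma>\<in>single_sink u. pmf (rule_law (avoid_rule u) t) \<sigma>) =
      real (card (single_sink u)) * pmf (rule_law (avoid_rule u) m) \<sigma>0"
    unfolding Suc using sum_pmf_avoid_law_single_sink[OF \<sigma>0]
    by (subst sum.swap) (simp add: single_sink_def)
  ultimately show ?thesis
    using mult_left_mono[OF card_mult_pmf_avoid_law_le[OF \<sigma>0, of u m], of "real (card (single_sink u))"]
    by (simp add: field_simps)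
qed simp

section \<open>Expected number of pops at a vertex\<close>

definition step_cost :: "(('a set \<Rightarrow> 'a) \<Rightarrow> 'a) \<Rightarrow> ('a \<Rightarrow> real) \<Rightarrow> ('a set \<Rightarrow> 'a) \<Rightarrow> real" where
  "step_cost f c \<sigma> = (if has_sink V E \<sigma> then c (f \<sigma>) else 0)"

fun expected_cost :: "(('a set \<Rightarrow> 'a) \<Rightarrow> 'a) \<Rightarrow> ('a \<Rightarrow> real) \<Rightarrow> nat \<Rightarrow> ('a set \<Rightarrow> 'a) \<Rightarrow> real" where
  "expected_cost f c 0 \<sigma> = 0"
| "expected_cost f c (Suc n) \<sigma> =
    step_cost f c \<sigma> + expect (rule_step f \<sigma>) (expected_cost f c n)"

lemma expected_cost_sink_free: "\<not> has_sink V E \<sigma> \<Longrightarrow> expected_cost f c n \<sigma> = 0"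
  by (induction n) (simp_all add: step_cost_def rule_step_def)

lemma expect_expected_cost:
  "expect (rule_law f s) (expected_cost f c n) = (\<Sum>t<n. expect (rule_law f (s + t)) (step_cost f c))"
proof (induction n arbitrary: s)
  case (Suc n)
  have "expect (rule_law f s) (expected_cost f c (Suc n)) =
      expect (rule_law f s) (\<lambda>\<sigma>. step_cost f c \<sigma> + expect (rule_step f \<sigma>) (expected_cost f c n))"
    by (rule expect_cong) simp
  also have "\<dots> = expect (rule_law f s) (step_cost f c) + expect (rule_law f (Suc s)) (expected_cost f c n)"
    by (simp only: expect_add[OF finite_set_rule_law] expect_rule_law_Suc)
  finally show ?case
    by (subst sum.lessThan_Suc_shift) (simp add: Suc.IH del: rule_law.simps expected_cost.simps)
next
  case 0
  have "expected_cost f c 0 = (\<lambda>_. 0)" by (rule ext) simp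
  thus ?case by simp
qed

abbreviation cost_payoff :: "('a set \<Rightarrow> 'a) \<Rightarrow> real \<Rightarrow> real" where
  "cost_payoff \<sigma> a \<equiv> if has_sink V E \<sigma> then 0 else a"

lemma run_value_cost_le:
  assumes c: "\<And>x. 0 \<le> c x"
  shows "\<sigma> \<in> \<Omega> \<Longrightarrow> 0 \<le> a \<Longrightarrow> run_value f c cost_payoff n \<sigma> a \<le> a + expected_cost f c n \<sigma>"
proof (induction n arbitrary: \<sigma> a)
  case (Suc n)
  show ?case
  proof (cases "has_sink V E \<sigma>")
    case True
    let ?M = "pop E \<sigma> (f \<sigma>)"
    have fin: "finite (set_pmf ?M)" using finite_set_pop Suc(2) by blast
    have "run_value f c cost_payoff (Suc n) \<sigma> a =
        expect ?M (\<lambda>\<sigma>'. run_value f c cost_payoff n \<sigma>' (a + c (f \<sigma>)))"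
      using True by simp
    also have "\<dots> \<le> expect ?M (\<lambda>\<sigma>'. (a + c (f \<sigma>)) + expected_cost f c n \<sigma>')"
      by (rule expect_mono[OF fin], rule Suc.IH) (use set_pop_subset Suc(2,3) c in auto)
    also have "\<dots> = a + expected_cost f c (Suc n) \<sigma>"
      using True by (simp add: expect_add[OF fin] step_cost_def rule_step_def)
    finally show ?thesis .
  qed (simp add: expected_cost_sink_free del: expected_cost.simps)
qed simp

lemma run_value_cost_ge:
  assumes c: "\<And>x. 0 \<le> c x"
  shows "\<sigma> \<in> \<Omega> \<Longrightarrow> 0 \<le> a \<Longrightarrow> a * sf_prob f k \<sigma> \<le> run_value f c cost_payoff k \<sigma> a"
proof (induction k arbitrary: \<sigma> a)
  case (Suc k)
  show ?case
  proof (cases "has_sink V E \<sigma>")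
    case True
    let ?M = "pop E \<sigma> (f \<sigma>)"
    have fin: "finite (set_pmf ?M)" using finite_set_pop Suc(2) by blast
    have "a * sf_prob f (Suc k) \<sigma> = expect ?M (\<lambda>\<sigma>'. a * sf_prob f k \<sigma>')"
      using True by simp
    also have "\<dots> \<le> expect ?M (\<lambda>\<sigma>'. run_value f c cost_payoff k \<sigma>' (a + c (f \<sigma>)))"
    proof (rule expect_mono[OF fin])
      fix \<sigma>' assume "\<sigma>' \<in> set_pmf ?M"
      hence \<sigma>': "\<sigma>' \<in> \<Omega>" using set_pop_subset Suc(2) by blast
      have "a * sf_prob f k \<sigma>' \<le> (a + c (f \<sigma>)) * sf_prob f k \<sigma>'"
        using c sf_prob_bounds[OF \<sigma>'] by (simp add: mult_right_mono)
      also have "\<dots> \<le> run_value f c cost_payoff k \<sigma>' (a + c (f \<sigma>))"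
        by (rule Suc.IH[OF \<sigma>']) (use Suc(3) c in \<open>simp add: add_nonneg_nonneg\<close>)
      finally show "a * sf_prob f k \<sigma>' \<le> run_value f c cost_payoff k \<sigma>' (a + c (f \<sigma>))" .
    qed
    also have "\<dots> = run_value f c cost_payoff (Suc k) \<sigma> a" using True by simp
    finally show ?thesis .
  qed (simp add: sf_prob_sink_free)
qed simp

text \<open>The factor \<open>1 - stall_bound k\<close> discounts the histories that have not finished
  \<open>k\<close> steps later.\<close>

lemma expect_hist_cost_le_rule_law:
  assumes f: "sink_rule f" and sel: "hist_sink_rule sel" and c: "\<And>x. 0 \<le> c x"
    and SF: "sink_free_orientations V E \<noteq> {}"
  shows "(1 - stall_bound k) * expect (sp_hist V E sel j) (hist_cost sel c) \<le>
    (\<Sum>t<j + k. expect (rule_law f t) (step_cost f c))"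
proof -
  let ?H = "sp_hist V E sel j"
  have "(1 - stall_bound k) * expect ?H (hist_cost sel c) =
      expect ?H (\<lambda>h. hist_cost sel c h * (1 - stall_bound k))"
    by (simp add: mult.commute)
  also have "\<dots> \<le> expect ?H (\<lambda>h. run_value f c cost_payoff k (hd h) (hist_cost sel c h))"
  proof (rule expect_mono[OF finite_set_sp_hist])
    fix h assume "h \<in> set_pmf ?H"
    hence h: "hd h \<in> \<Omega>" using wf_hist_sp_hist by (auto simp: wf_hist_def)
    have "hist_cost sel c h * (1 - stall_bound k) \<le> hist_cost sel c h * sf_prob f k (hd h)"
      using sf_prob_ge_stall_bound[OF f SF h] hist_cost_nonneg[OF c] by (intro mult_left_mono)
    also have "\<dots> \<le> run_value f c cost_payoff k (hd h) (hist_cost sel c h)"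
      by (rule run_value_cost_ge[OF c h hist_cost_nonneg[OF c]])
    finally show "hist_cost sel c h * (1 - stall_bound k) \<le>
        run_value f c cost_payoff k (hd h) (hist_cost sel c h)" .
  qed
  also have "\<dots> = expect (random_orientation E) (\<lambda>\<sigma>. run_value f c cost_payoff (j + k) \<sigma> 0)"
    by (rule expect_sp_hist_run_value[OF f _ sel]) simp
  also have "\<dots> \<le> expect (random_orientation E) (expected_cost f c (j + k))"
  proof (rule expect_mono)
    show "finite (set_pmf (random_orientation E))"
      using finite_orientations by (simp add: set_random_orientation)
    fix \<sigma> assume "\<sigma> \<in> set_pmf (random_orientation E)"
    thus "run_value f c cost_payoff (j + k) \<sigma> 0 \<le> expected_cost f c (j + k) \<sigma>"
      using run_value_cost_le[OF c, of \<sigma> 0] by (simp add: set_random_orientation)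
  qed
  also have "\<dots> = (\<Sum>t<j + k. expect (rule_law f t) (step_cost f c))"
    using expect_expected_cost[of f 0 c "j + k"] by simp
  finally show ?thesis .
qed

lemma expect_step_cost_avoid_rule:
  "expect (rule_law (avoid_rule u) t) (step_cost (avoid_rule u) (indicator {u})) =
    (\<Sum>\<sigma>\<in>single_sink u. pmf (rule_law (avoid_rule u) t) \<sigma>)"
proof -
  have "step_cost (avoid_rule u) (indicator {u}) \<sigma> = (if sinks \<sigma> = {u} then 1 else 0)" for \<sigma>
    using avoid_rule_other[of \<sigma> u]
    by (cases "sinks \<sigma> - {u} = {}") (auto simp: step_cost_def avoid_rule_def has_sink_iff_sinks)
  hence "expect (rule_law (avoid_rule u) t) (step_cost (avoid_rule u) (indicator {u})) =
      (\<Sum>\<sigma>\<in>\<Omega>. if sinks \<sigma> = {u} then pmf (rule_law (avoid_rule u) t) \<sigma> else 0)"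
    by (subst expect_finite_sum[OF finite_orientations set_rule_law]) (auto intro!: sum.cong)
  thus ?thesis by (simp add: single_sink_def sum.inter_filter[OF finite_orientations])
qed

lemma expect_pops_at_le:
  assumes sel: "hist_sink_rule sel" and SF: "sink_free_orientations V E \<noteq> {}"
  shows "expect (sp_hist V E sel j) (hist_cost sel (indicator {u})) \<le>
    real (card (single_sink u)) / real (card (sink_free_orientations V E))"
proof (rule tendsto_upperbound)
  show "(\<lambda>k. (1 - stall_bound k) * expect (sp_hist V E sel j) (hist_cost sel (indicator {u})))
      \<longlonglongrightarrow> expect (sp_hist V E sel j) (hist_cost sel (indicator {u}))"
    using tendsto_mult[OF tendsto_diff[OF tendsto_const stall_bound_tendsto_zero] tendsto_const,
        of 1 "expect (sp_hist V E sel j) (hist_cost sel (indicator {u}))"] by simp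
  show "\<forall>\<^sub>F k in sequentially.
      (1 - stall_bound k) * expect (sp_hist V E sel j) (hist_cost sel (indicator {u})) \<le>
      real (card (single_sink u)) / real (card (sink_free_orientations V E))"
  proof (rule always_eventually, rule allI)
    fix k
    have "(1 - stall_bound k) * expect (sp_hist V E sel j) (hist_cost sel (indicator {u})) \<le>
        (\<Sum>t<j + k. expect (rule_law (avoid_rule u) t) (step_cost (avoid_rule u) (indicator {u})))"
      by (rule expect_hist_cost_le_rule_law[OF sink_rule_avoid_rule sel _ SF]) simp
    also have "\<dots> = (\<Sum>t<j + k. \<Sum>\<sigma>\<in>single_sink u. pmf (rule_law (avoid_rule u) t) \<sigma>)"
      by (simp only: expect_step_cost_avoid_rule)
    also have "\<dots> \<le> real (card (single_sink u)) / real (card (sink_free_orientations V E))"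
      by (rule sum_pmf_avoid_law_single_sink_le[OF SF])
    finally show "(1 - stall_bound k) * expect (sp_hist V E sel j) (hist_cost sel (indicator {u})) \<le>
        real (card (single_sink u)) / real (card (sink_free_orientations V E))" .
  qed
qed simp

section \<open>Orientations with a single sink\<close>

definition out_edges :: "('a set \<Rightarrow> 'a) \<Rightarrow> 'a \<Rightarrow> 'a set set" where
  "out_edges \<sigma> x = {e\<in>E. x \<in> e \<and> \<sigma> e \<noteq> x}"

definition outdeg :: "('a set \<Rightarrow> 'a) \<Rightarrow> 'a \<Rightarrow> nat" where
  "outdeg \<sigma> x = card (out_edges \<sigma> x)"

definition out_edge :: "('a set \<Rightarrow> 'a) \<Rightarrow> 'a \<Rightarrow> 'a set" where
  "out_edge \<sigma> x = (SOME e. e \<in> out_edges \<sigma> x)"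

definition succ :: "('a set \<Rightarrow> 'a) \<Rightarrow> 'a \<Rightarrow> 'a" where
  "succ \<sigma> x = \<sigma> (out_edge \<sigma> x)"

definition tail :: "('a set \<Rightarrow> 'a) \<Rightarrow> 'a set \<Rightarrow> 'a" where
  "tail \<sigma> e = (THE t. t \<in> e \<and> t \<noteq> \<sigma> e)"

text \<open>\<open>unflip \<tau> y k\<close> reverses the first \<open>k\<close> edges of the walk that leaves \<open>y\<close> along
  \<open>out_edge \<tau>\<close>; every orientation whose only sink is \<open>y\<close> arises in this way from a
  sink-free \<open>\<tau>\<close> with \<open>1 \<le> k \<le> card V\<close>.\<close>

fun unflip :: "('a set \<Rightarrow> 'a) \<Rightarrow> 'a \<Rightarrow> nat \<Rightarrow> ('a set \<Rightarrow> 'a)" where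
  "unflip \<tau> y 0 = \<tau>"
| "unflip \<tau> y (Suc k) = (unflip \<tau> (\<tau> (out_edge \<tau> y)) k)(out_edge \<tau> y := y)"

lemma finite_out_edges: "finite (out_edges \<sigma> x)"
  unfolding out_edges_def using finite_E by simp

lemma is_sink_iff_out_edges: "is_sink E \<sigma> x \<longleftrightarrow> out_edges \<sigma> x = {}"
  by (auto simp: is_sink_def out_edges_def)

lemma out_edges_cong:
  assumes "\<And>e. e \<in> E \<Longrightarrow> z \<in> e \<Longrightarrow> \<sigma>' e = \<sigma> e"
  shows "out_edges \<sigma>' z = out_edges \<sigma> z"
  unfolding out_edges_def
proof (rule Collect_cong)
  fix e
  show "(e \<in> E \<and> z \<in> e \<and> \<sigma>' e \<noteq> z) = (e \<in> E \<and> z \<in> e \<and> \<sigma> e \<noteq> z)"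
    using assms[of e] by (cases "e \<in> E \<and> z \<in> e") auto
qed

lemma out_edge_in: "out_edges \<sigma> z \<noteq> {} \<Longrightarrow> out_edge \<sigma> z \<in> out_edges \<sigma> z"
  unfolding out_edge_def by (simp add: some_in_eq)

lemma out_edge_eq: "out_edges \<sigma> x = {e} \<Longrightarrow> out_edge \<sigma> x = e"
  by (simp add: out_edge_def)

lemma out_edges_eq_singleton: "outdeg \<sigma> x = 1 \<Longrightarrow> e \<in> out_edges \<sigma> x \<Longrightarrow> out_edges \<sigma> x = {e}"
  unfolding outdeg_def using finite_out_edges by (metis card_1_singletonE singletonD)

lemma ex1_tail:
  assumes "\<sigma> \<in> \<Omega>" "e \<in> E"
  shows "\<exists>!t. t \<in> e \<and> t \<noteq> \<sigma> e"
proof -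
  obtain a b where "e = {a, b}" "a \<noteq> b" using edge_doubleton[OF assms(2)] by blast
  moreover have "\<sigma> e \<in> e" using assms by (simp add: in_orientations_iff)
  ultimately show ?thesis by auto
qed

lemma tail_in_edge: "\<sigma> \<in> \<Omega> \<Longrightarrow> e \<in> E \<Longrightarrow> tail \<sigma> e \<in> e \<and> tail \<sigma> e \<noteq> \<sigma> e"
  unfolding tail_def by (rule theI'[OF ex1_tail])

lemma tail_eqI: "\<sigma> \<in> \<Omega> \<Longrightarrow> e \<in> E \<Longrightarrow> t \<in> e \<Longrightarrow> t \<noteq> \<sigma> e \<Longrightarrow> tail \<sigma> e = t"
  unfolding tail_def by (rule the1_equality[OF ex1_tail]) auto

lemma edge_eq_tail_head:
  assumes "\<sigma> \<in> \<Omega>" "e \<in> E"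
  shows "e = {tail \<sigma> e, \<sigma> e}"
proof -
  obtain a b where "e = {a, b}" "a \<noteq> b" using edge_doubleton[OF assms(2)] by blast
  moreover have "\<sigma> e \<in> e" using assms by (simp add: in_orientations_iff)
  ultimately show ?thesis using tail_in_edge[OF assms] by auto
qed

lemma out_edges_tail:
  assumes "\<sigma> \<in> \<Omega>" "e \<in> E"
  shows "e \<in> out_edges \<sigma> (tail \<sigma> e)"
  using tail_in_edge[OF assms] assms(2) by (auto simp: out_edges_def)

lemma tail_out_edge: "\<sigma> \<in> \<Omega> \<Longrightarrow> out_edges \<sigma> z \<noteq> {} \<Longrightarrow> tail \<sigma> (out_edge \<sigma> z) = z"
  using out_edge_in[of \<sigma> z] by (auto simp: out_edges_def intro: tail_eqI)

lemma succ_edge: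
  assumes "\<sigma> \<in> \<Omega>" "out_edges \<sigma> z \<noteq> {}"
  shows "out_edge \<sigma> z = {z, succ \<sigma> z} \<and> out_edge \<sigma> z \<in> E \<and> succ \<sigma> z \<noteq> z"
proof -
  let ?e = "out_edge \<sigma> z"
  have e: "?e \<in> E" "z \<in> ?e" "\<sigma> ?e \<noteq> z" using out_edge_in[OF assms(2)] by (auto simp: out_edges_def)
  moreover have "\<sigma> ?e \<in> ?e" using assms(1) e(1) by (simp add: in_orientations_iff)
  moreover obtain a b where "?e = {a, b}" "a \<noteq> b" using edge_doubleton[OF e(1)] by blast
  ultimately show ?thesis by (auto simp: succ_def)
qed

lemma out_edges_flip_head:
  assumes "is_sink E \<sigma> y" "e \<in> E" "x \<in> e" "y \<in> e" "x \<noteq> y"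
  shows "out_edges (\<sigma>(e := x)) y = {e}"
  using assms by (auto simp: out_edges_def is_sink_def)

lemma out_edges_flip_tail: "x \<in> e \<Longrightarrow> out_edges (\<sigma>(e := x)) x = out_edges \<sigma> x - {e}"
  by (auto simp: out_edges_def)

lemma sinks_flip:
  assumes \<sigma>: "\<sigma> \<in> \<Omega>" "sinks \<sigma> = {y}" and e: "e = {x, y}" "e \<in> E" "x \<noteq> y"
  shows "sinks (\<sigma>(e := x)) = (if out_edges \<sigma> x \<subseteq> {e} then {x} else {})"
proof -
  have y: "is_sink E \<sigma> y" using \<sigma>(2) by (auto simp: sinks_def)
  have "x \<in> V" using edge_subset e by blast
  have others: "z \<notin> sinks (\<sigma>(e := x))" if "z \<noteq> x" for z
  proof (cases "z = y")
    case True
    thus ?thesis using out_edges_flip_head[OF y e(2)] e by (simp add: sinks_def is_sink_iff_out_edges)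
  next
    case False
    hence "out_edges (\<sigma>(e := x)) z = out_edges \<sigma> z"
      using that e(1) by (intro out_edges_cong) auto
    thus ?thesis using \<sigma>(2) False by (auto simp: sinks_def is_sink_iff_out_edges)
  qed
  have x_iff: "x \<in> sinks (\<sigma>(e := x)) \<longleftrightarrow> out_edges \<sigma> x \<subseteq> {e}"
    using \<open>x \<in> V\<close> by (simp add: sinks_def is_sink_iff_out_edges out_edges_flip_tail e(1))
  show ?thesis
  proof (cases "out_edges \<sigma> x \<subseteq> {e}")
    case True
    hence "x \<in> sinks (\<sigma>(e := x))" using x_iff by simp
    hence "sinks (\<sigma>(e := x)) = {x}" using others by fastforce
    thus ?thesis using True by simp
  next
    case False
    hence "x \<notin> sinks (\<sigma>(e := x))" using x_iff by simp
    hence "sinks (\<sigma>(e := x)) = {}" using others by fastforce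
    thus ?thesis using False by simp
  qed
qed

text \<open>Reversing the
  chain turns the single sink \<open>y\<close> into a sink-free orientation.\<close>

fun chain :: "('a set \<Rightarrow> 'a) \<Rightarrow> 'a \<Rightarrow> 'a list \<Rightarrow> bool" where
  "chain \<sigma> y [] = False"
| "chain \<sigma> y [x] = ({x, y} \<in> E \<and> \<sigma> {x, y} = y \<and> x \<noteq> y \<and> 2 \<le> outdeg \<sigma> x)"
| "chain \<sigma> y (x # x' # q) =
    ({x, y} \<in> E \<and> \<sigma> {x, y} = y \<and> x \<noteq> y \<and> outdeg \<sigma> x = 1 \<and> chain \<sigma> x (x' # q))"

fun chain_edges :: "'a \<Rightarrow> 'a list \<Rightarrow> 'a set set" where
  "chain_edges y [] = {}"
| "chain_edges y (x # q) = insert {x, y} (chain_edges x q)"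

lemma chain_edges_subset: "e \<in> chain_edges y p \<Longrightarrow> e \<subseteq> insert y (set p)"
  by (induction p arbitrary: y) auto

lemma chain_subset_V: "chain \<sigma> y p \<Longrightarrow> set p \<subseteq> V"
  by (induction \<sigma> y p rule: chain.induct) (auto dest: edge_subset)

lemma chain_cong:
  "chain \<sigma> y p \<Longrightarrow> (\<And>z e. z \<in> set p \<Longrightarrow> e \<in> E \<Longrightarrow> z \<in> e \<Longrightarrow> \<sigma>' e = \<sigma> e) \<Longrightarrow> chain \<sigma>' y p"
proof (induction \<sigma> y p rule: chain.induct)
  case (2 \<sigma> y x)
  have "\<sigma>' {x, y} = \<sigma> {x, y}" using 2(2)[of x "{x, y}"] 2(1) by simp
  moreover have "out_edges \<sigma>' x = out_edges \<sigma> x" by (rule out_edges_cong) (use 2(2)[of x] in simp)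
  ultimately show ?case using 2 by (simp add: outdeg_def)
next
  case (3 \<sigma> y x x' q)
  have "\<sigma>' {x, y} = \<sigma> {x, y}" using 3(3)[of x "{x, y}"] 3(2) by simp
  moreover have "out_edges \<sigma>' x = out_edges \<sigma> x" by (rule out_edges_cong) (use 3(3)[of x] in simp)
  moreover have "chain \<sigma>' x (x' # q)" using 3(2) by (intro 3(1)) (auto intro: 3(3))
  ultimately show ?case using 3(2) by (simp add: outdeg_def)
qed simp

lemma flip_chain_head:
  assumes ch: "chain \<sigma> y (x # q)" and \<sigma>: "\<sigma> \<in> \<Omega>" "sinks \<sigma> = {y}"
  defines "\<sigma>' \<equiv> \<sigma>({x, y} := x)"
  shows "\<sigma>' \<in> \<Omega>" and "out_edges \<sigma>' y = {{x, y}}" and "\<sigma>'({x, y} := y) = \<sigma>"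
    and "sinks \<sigma>' = (if q = [] then {} else {x})"
proof -
  define e where "e = {x, y}"
  have e: "e \<in> E" "\<sigma> e = y" "x \<noteq> y" using ch by (cases q; auto simp: e_def)+
  show "\<sigma>' \<in> \<Omega>" using \<sigma>(1) e by (auto simp: in_orientations_iff \<sigma>'_def e_def)
  show "out_edges \<sigma>' y = {{x, y}}"
    unfolding \<sigma>'_def
    by (rule out_edges_flip_head) (use \<sigma>(2) e in \<open>auto simp: e_def sinks_def\<close>)
  show "\<sigma>'({x, y} := y) = \<sigma>" using e by (auto simp: \<sigma>'_def e_def)
  have e_out: "e \<in> out_edges \<sigma> x" using e by (auto simp: out_edges_def e_def)
  have "out_edges \<sigma> x \<subseteq> {e} \<longleftrightarrow> q \<noteq> []"
  proof (cases q)
    case Nil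
    thus ?thesis using ch card_mono[of "{e}" "out_edges \<sigma> x"] by (auto simp: outdeg_def)
  next
    case (Cons x' q')
    thus ?thesis using ch out_edges_eq_singleton[OF _ e_out] by auto
  qed
  thus "sinks \<sigma>' = (if q = [] then {} else {x})"
    using sinks_flip[OF \<sigma> e_def e(1,3)] by (simp add: \<sigma>'_def e_def)
qed

lemma unflip_chain:
  "chain \<sigma> y p \<Longrightarrow> distinct (y # p) \<Longrightarrow> \<sigma> \<in> \<Omega> \<Longrightarrow> sinks \<sigma> = {y} \<Longrightarrow>
   \<exists>\<tau>\<in>sink_free_orientations V E. unflip \<tau> y (length p) = \<sigma> \<and>
     (\<forall>e. e \<notin> chain_edges y p \<longrightarrow> \<tau> e = \<sigma> e)"
proof (induction p arbitrary: \<sigma> y)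
  case (Cons x q)
  let ?\<sigma>' = "\<sigma>({x, y} := x)"
  note flip = flip_chain_head[OF Cons.prems(1,3,4)]
  show ?case
  proof (cases q)
    case Nil
    hence "?\<sigma>' \<in> sink_free_orientations V E" using flip(1,4) by (simp add: sink_free_orientations_iff)
    moreover have "unflip ?\<sigma>' y (length (x # q)) = \<sigma>"
      using Nil flip(3) out_edge_eq[OF flip(2)] by simp
    moreover have "\<forall>e'. e' \<notin> chain_edges y (x # q) \<longrightarrow> ?\<sigma>' e' = \<sigma> e'" by simp
    ultimately show ?thesis by blast
  next
    case (Cons x' q')
    have dq: "distinct (x # q)" "y \<notin> set q" "x \<noteq> y" using Cons.prems(2) by auto
    have ch': "chain ?\<sigma>' x q"
      by (rule chain_cong[of \<sigma> x q]) (use Cons.prems(1) \<open>q = x' # q'\<close> dq in auto)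
    have sinks': "sinks ?\<sigma>' = {x}" using flip(4) \<open>q = x' # q'\<close> by simp
    obtain \<tau> where \<tau>: "\<tau> \<in> sink_free_orientations V E" "unflip \<tau> x (length q) = ?\<sigma>'"
        "\<forall>e'. e' \<notin> chain_edges x q \<longrightarrow> \<tau> e' = ?\<sigma>' e'"
      using Cons.IH[OF ch' dq(1) flip(1) sinks'] by blast
    have y_free: "e' \<notin> chain_edges x q" if "y \<in> e'" for e'
      using that chain_edges_subset[of e' x q] dq by blast
    have "out_edges \<tau> y = {{x, y}}"
      using flip(2) \<tau>(3) y_free by (subst out_edges_cong[of y \<tau> ?\<sigma>']) auto
    moreover have "\<tau> {x, y} = x" using \<tau>(3) y_free[of "{x, y}"] by simp
    ultimately have "unflip \<tau> y (length (x # q)) = \<sigma>"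
      using out_edge_eq \<tau>(2) flip(3) by simp
    moreover have "\<forall>e'. e' \<notin> chain_edges y (x # q) \<longrightarrow> \<tau> e' = \<sigma> e'"
      using \<tau>(3) by auto
    ultimately show ?thesis using \<tau>(1) by blast
  qed
qed simp

fun succ_path :: "('a set \<Rightarrow> 'a) \<Rightarrow> nat \<Rightarrow> 'a \<Rightarrow> 'a list \<Rightarrow> 'a list" where
  "succ_path \<sigma> 0 z p = p"
| "succ_path \<sigma> (Suc n) z p = succ_path \<sigma> n (succ \<sigma> z) (z # p)"

lemma succ_path_eq: "succ_path \<sigma> n z p = rev (map (\<lambda>i. (succ \<sigma> ^^ i) z) [0..<n]) @ p"
proof (induction n arbitrary: z p)
  case (Suc n)
  have "map (\<lambda>i. (succ \<sigma> ^^ i) z) [0..<Suc n] = z # map (\<lambda>i. (succ \<sigma> ^^ i) (succ \<sigma> z)) [0..<n]"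
    by (simp add: map_upt_Suc funpow_swap1 del: upt_Suc)
  thus ?case using Suc.IH by simp
qed simp

lemma chain_succ_path:
  assumes \<sigma>: "\<sigma> \<in> \<Omega>"
  shows "chain \<sigma> z p \<Longrightarrow> (\<forall>i<n. outdeg \<sigma> ((succ \<sigma> ^^ i) z) = 1) \<Longrightarrow>
    chain \<sigma> ((succ \<sigma> ^^ n) z) (succ_path \<sigma> n z p)"
proof (induction n arbitrary: z p)
  case (Suc n)
  have "outdeg \<sigma> z = 1" using Suc.prems(2) by auto
  hence "out_edges \<sigma> z \<noteq> {}" by (auto simp: outdeg_def)
  hence "out_edge \<sigma> z = {z, succ \<sigma> z}" "out_edge \<sigma> z \<in> E" "succ \<sigma> z \<noteq> z"
    using succ_edge[OF \<sigma>, of z] by blast+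
  hence "chain \<sigma> (succ \<sigma> z) (z # p)"
    using Suc.prems(1) \<open>outdeg \<sigma> z = 1\<close>
    by (cases p) (auto simp: succ_def insert_commute)
  moreover have "\<forall>i<n. outdeg \<sigma> ((succ \<sigma> ^^ i) (succ \<sigma> z)) = 1"
    using Suc.prems(2) by (auto simp: funpow_swap1[symmetric])
  ultimately show ?case using Suc.IH by (simp add: funpow_swap1)
qed simp

definition basin :: "('a set \<Rightarrow> 'a) \<Rightarrow> 'a \<Rightarrow> 'a set" where
  "basin \<sigma> u = {z. \<exists>n. (succ \<sigma> ^^ n) z = u \<and> (\<forall>i<n. outdeg \<sigma> ((succ \<sigma> ^^ i) z) = 1)}"

lemma root_in_basin: "u \<in> basin \<sigma> u"
  unfolding basin_def by (rule CollectI, rule exI[of _ 0]) simp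

lemma outdeg_basin:
  assumes "t \<in> basin \<sigma> u" "t \<noteq> u"
  shows "outdeg \<sigma> t = 1"
proof -
  obtain n where n: "(succ \<sigma> ^^ n) t = u" "\<forall>i<n. outdeg \<sigma> ((succ \<sigma> ^^ i) t) = 1"
    using assms(1) by (auto simp: basin_def)
  hence "n \<noteq> 0" using assms(2) by (cases n) auto
  thus ?thesis using n(2) by auto
qed

lemma basin_subset_V:
  assumes "u \<in> V"
  shows "basin \<sigma> u \<subseteq> V"
proof
  fix t assume "t \<in> basin \<sigma> u"
  thus "t \<in> V"
  proof (cases "t = u")
    case False
    hence "out_edges \<sigma> t \<noteq> {}" using outdeg_basin \<open>t \<in> _\<close> by (fastforce simp: outdeg_def)
    thus ?thesis using edge_subset by (auto simp: out_edges_def)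
  qed (use assms in simp)
qed

lemma basin_pred:
  assumes "outdeg \<sigma> a = 1" "e \<in> out_edges \<sigma> a" "\<sigma> e \<in> basin \<sigma> u"
  shows "a \<in> basin \<sigma> u"
proof -
  have "succ \<sigma> a = \<sigma> e"
    using out_edges_eq_singleton[OF assms(1,2)] by (simp add: succ_def out_edge_eq)
  then obtain n where "(succ \<sigma> ^^ n) (succ \<sigma> a) = u" "\<forall>i<n. outdeg \<sigma> ((succ \<sigma> ^^ i) (succ \<sigma> a)) = 1"
    using assms(3) by (auto simp: basin_def)
  thus ?thesis unfolding basin_def using assms(1)
    by (intro CollectI exI[of _ "Suc n"]) (auto simp: funpow_swap1 less_Suc_eq_0_disj)
qed

lemma basin_succ:
  assumes "b \<in> basin \<sigma> u" "b \<noteq> u"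
  shows "succ \<sigma> b \<in> basin \<sigma> u"
proof -
  obtain n where n: "(succ \<sigma> ^^ n) b = u" "\<forall>i<n. outdeg \<sigma> ((succ \<sigma> ^^ i) b) = 1"
    using assms(1) by (auto simp: basin_def)
  then obtain m where "n = Suc m" using assms(2) by (cases n) auto
  thus ?thesis unfolding basin_def using n
    by (intro CollectI exI[of _ m]) (auto simp: funpow_swap1[symmetric])
qed

text \<open>A sink-free orientation gives every vertex an outgoing edge, and these are distinct.\<close>

lemma card_le_card_inner_edges:
  assumes \<tau>: "\<tau> \<in> sink_free_orientations V E" and "R \<subseteq> V"
    and closed: "\<And>e. e \<in> E \<Longrightarrow> e \<inter> R \<noteq> {} \<Longrightarrow> e \<subseteq> R"
  shows "card R \<le> card {e\<in>E. e \<subseteq> R}"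
proof (rule card_inj_on_le)
  have \<tau>_out: "out_edges \<tau> z \<noteq> {}" if "z \<in> R" for z
    using \<tau> that \<open>R \<subseteq> V\<close> by (auto simp: sink_free_orientations_iff sinks_def is_sink_iff_out_edges)
  show "inj_on (out_edge \<tau>) R"
    using \<tau>_out tail_out_edge \<tau> by (intro inj_on_inverseI[of _ "tail \<tau>"])
      (auto simp: sink_free_orientations_def)
  show "out_edge \<tau> ` R \<subseteq> {e\<in>E. e \<subseteq> R}"
  proof
    fix e assume "e \<in> out_edge \<tau> ` R"
    then obtain z where z: "z \<in> R" "e = out_edge \<tau> z" by blast
    hence "e \<in> E" "z \<in> e" using out_edge_in[OF \<tau>_out] by (auto simp: out_edges_def)
    thus "e \<in> {e\<in>E. e \<subseteq> R}" using closed z(1) by auto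
  qed
qed (simp add: finite_E)

lemma basin_edge_tail:
  assumes \<sigma>: "\<sigma> \<in> \<Omega>" and u: "out_edges \<sigma> u = {}"
    and no_entry: "\<forall>e\<in>E. \<sigma> e \<in> basin \<sigma> u \<longrightarrow> outdeg \<sigma> (tail \<sigma> e) < 2"
    and e: "e \<in> E" "e \<inter> basin \<sigma> u \<noteq> {}"
  shows "tail \<sigma> e \<in> basin \<sigma> u - {u} \<and> out_edges \<sigma> (tail \<sigma> e) = {e}"
proof -
  have t: "e \<in> out_edges \<sigma> (tail \<sigma> e)" by (rule out_edges_tail[OF \<sigma> e(1)])
  hence "tail \<sigma> e \<noteq> u" using u by auto
  moreover have "tail \<sigma> e \<in> basin \<sigma> u \<and> outdeg \<sigma> (tail \<sigma> e) = 1"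
  proof (cases "\<sigma> e \<in> basin \<sigma> u")
    case True
    have "outdeg \<sigma> (tail \<sigma> e) \<noteq> 0" using t finite_out_edges by (auto simp: outdeg_def)
    hence "outdeg \<sigma> (tail \<sigma> e) = 1" using no_entry e(1) True by auto
    thus ?thesis using basin_pred[OF _ t True] by blast
  next
    case False
    obtain b where "b \<in> e" "b \<in> basin \<sigma> u" using e(2) by blast
    hence "tail \<sigma> e = b" using False tail_eqI[OF \<sigma> e(1)] by auto
    thus ?thesis using outdeg_basin \<open>b \<in> basin \<sigma> u\<close> \<open>tail \<sigma> e \<noteq> u\<close> by simp
  qed
  ultimately show ?thesis using t out_edges_eq_singleton by auto
qed

lemma basin_edge_subset:
  assumes \<sigma>: "\<sigma> \<in> \<Omega>" and u: "out_edges \<sigma> u = {}"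
    and no_entry: "\<forall>e\<in>E. \<sigma> e \<in> basin \<sigma> u \<longrightarrow> outdeg \<sigma> (tail \<sigma> e) < 2"
    and e: "e \<in> E" "e \<inter> basin \<sigma> u \<noteq> {}"
  shows "e \<subseteq> basin \<sigma> u"
proof -
  note tails = basin_edge_tail[OF assms]
  hence "succ \<sigma> (tail \<sigma> e) = \<sigma> e" by (simp add: succ_def out_edge_eq)
  hence "\<sigma> e \<in> basin \<sigma> u" using basin_succ[of "tail \<sigma> e" \<sigma> u] tails by simp
  hence "{tail \<sigma> e, \<sigma> e} \<subseteq> basin \<sigma> u" using tails by simp
  thus ?thesis using edge_eq_tail_head[OF \<sigma> e(1)] by simp
qed

text \<open>Otherwise the basin would be closed and span only one edge per non-root vertex, fewer
  than a sink-free orientation needs.\<close>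

lemma basin_entry_edge:
  assumes \<sigma>: "\<sigma> \<in> \<Omega>" and u: "sinks \<sigma> = {u}" and \<tau>: "\<tau> \<in> sink_free_orientations V E"
  shows "\<exists>e\<in>E. \<sigma> e \<in> basin \<sigma> u \<and> 2 \<le> outdeg \<sigma> (tail \<sigma> e)"
proof (rule ccontr)
  assume "\<not> ?thesis"
  hence no_entry: "\<forall>e\<in>E. \<sigma> e \<in> basin \<sigma> u \<longrightarrow> outdeg \<sigma> (tail \<sigma> e) < 2" by auto
  let ?R = "basin \<sigma> u"
  define ER where "ER = {e\<in>E. e \<subseteq> ?R}"
  have "u \<in> V" and u_sink: "out_edges \<sigma> u = {}"
    using u by (auto simp: sinks_def is_sink_iff_out_edges)
  have RV: "?R \<subseteq> V" by (rule basin_subset_V[OF \<open>u \<in> V\<close>])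
  hence "finite ?R" using finite_V by (rule finite_subset)
  note tails = basin_edge_tail[OF \<sigma> u_sink no_entry]
  have "card ?R \<le> card ER"
    unfolding ER_def by (rule card_le_card_inner_edges[OF \<tau> RV basin_edge_subset[OF \<sigma> u_sink no_entry]])
  also have "\<dots> \<le> card (?R - {u})"
  proof (rule card_inj_on_le)
    have ER: "e \<in> E" "e \<inter> ?R \<noteq> {}" if "e \<in> ER" for e
      using that edge_eq_tail_head[OF \<sigma>, of e] by (auto simp: ER_def)
    show "inj_on (tail \<sigma>) ER"
    proof (rule inj_on_inverseI)
      fix e assume "e \<in> ER"
      thus "out_edge \<sigma> (tail \<sigma> e) = e" using tails[OF ER] by (simp add: out_edge_eq)
    qed
    show "tail \<sigma> ` ER \<subseteq> ?R - {u}"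
    proof
      fix t assume "t \<in> tail \<sigma> ` ER"
      then obtain e where "e \<in> ER" "t = tail \<sigma> e" by blast
      thus "t \<in> ?R - {u}" using tails[OF ER] by simp
    qed
  qed (use \<open>finite ?R\<close> in simp)
  finally have "card ?R \<le> card (?R - {u})" .
  moreover have "card (?R - {u}) < card ?R" using \<open>finite ?R\<close> root_in_basin by (rule card_Diff1_less)
  ultimately show False by simp
qed

lemma obtain_chain:
  assumes \<sigma>: "\<sigma> \<in> \<Omega>" and u: "sinks \<sigma> = {u}" and \<tau>: "\<tau> \<in> sink_free_orientations V E"
  obtains p where "chain \<sigma> u p" "distinct (u # p)"
proof -
  obtain e where e: "e \<in> E" "\<sigma> e \<in> basin \<sigma> u" "2 \<le> outdeg \<sigma> (tail \<sigma> e)"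
    using basin_entry_edge[OF assms] by blast
  define b x where "b = \<sigma> e" and "x = tail \<sigma> e"
  have "x \<in> e" "x \<noteq> b" "b \<in> e" using tail_in_edge[OF \<sigma> e(1)] \<sigma> e(1)
    by (auto simp: b_def x_def in_orientations_iff)
  hence xb: "e = {x, b}" "x \<noteq> b" using edge_doubleton[OF e(1)] by auto
  define P where "P n \<longleftrightarrow> (succ \<sigma> ^^ n) b = u \<and> (\<forall>i<n. outdeg \<sigma> ((succ \<sigma> ^^ i) b) = 1)" for n
  have "\<exists>n. P n" using e(2) by (auto simp: basin_def P_def b_def)
  then obtain n where n: "P n" and least: "\<And>m. m < n \<Longrightarrow> \<not> P m"
    using exists_least_iff[of P] by blast
  have before: "(succ \<sigma> ^^ m) b \<noteq> u" if "m < n" for m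
    using least[OF that] n that by (auto simp: P_def)
  define g where "g i = (succ \<sigma> ^^ i) b" for i
  have "chain \<sigma> b [x]" using xb e(1,3) by (simp add: b_def x_def)
  hence "chain \<sigma> u (succ_path \<sigma> n b [x])"
    using chain_succ_path[OF \<sigma>, of b "[x]" n] n by (simp add: P_def)
  moreover have "distinct (u # succ_path \<sigma> n b [x])"
  proof -
    have "inj_on g {0..<n}"
      unfolding g_def by (rule inj_on_funpow_before) (use n before in \<open>simp_all add: P_def\<close>)
    moreover have "x \<notin> g ` {0..<n}" using n e(3) by (auto simp: P_def g_def x_def)
    moreover have "u \<notin> g ` {0..<n}"
    proof
      assume "u \<in> g ` {0..<n}"
      then obtain i where "i < n" "u = g i" by auto
      thus False using before[of i] by (simp add: g_def)
    qed
    moreover have "x \<noteq> u"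
    proof
      assume "x = u"
      hence "out_edges \<sigma> x = {}" using u by (auto simp: sinks_def is_sink_iff_out_edges)
      thus False using e(3) by (simp add: outdeg_def x_def)
    qed
    ultimately show ?thesis by (auto simp: succ_path_eq g_def[symmetric] distinct_map)
  qed
  ultimately show ?thesis using that by blast
qed

lemma card_single_sink_le:
  assumes SF: "sink_free_orientations V E \<noteq> {}"
  shows "card (single_sink u) \<le> card (sink_free_orientations V E) * card V"
proof -
  let ?S = "sink_free_orientations V E"
  obtain \<tau>0 where \<tau>0: "\<tau>0 \<in> ?S" using SF by blast
  have "single_sink u \<subseteq> (\<lambda>(\<tau>, k). unflip \<tau> u k) ` (?S \<times> {1..card V})"
  proof
    fix \<sigma> assume "\<sigma> \<in> single_sink u"
    hence \<sigma>: "\<sigma> \<in> \<Omega>" "sinks \<sigma> = {u}" by (auto simp: single_sink_def)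
    obtain p where p: "chain \<sigma> u p" "distinct (u # p)" using obtain_chain[OF \<sigma> \<tau>0] .
    obtain \<tau> where \<tau>: "\<tau> \<in> ?S" "unflip \<tau> u (length p) = \<sigma>" using unflip_chain[OF p \<sigma>] by blast
    have "set (u # p) \<subseteq> V" using chain_subset_V[OF p(1)] \<sigma>(2) by (auto simp: sinks_def)
    hence "length (u # p) \<le> card V" using card_mono[OF finite_V] distinct_card[OF p(2)] by metis
    moreover have "p \<noteq> []" using p(1) by auto
    ultimately have "length p \<in> {1..card V}" by (cases p) auto
    thus "\<sigma> \<in> (\<lambda>(\<tau>, k). unflip \<tau> u k) ` (?S \<times> {1..card V})" using \<tau> by force
  qed
  hence "card (single_sink u) \<le> card ((\<lambda>(\<tau>, k). unflip \<tau> u k) ` (?S \<times> {1..card V}))"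
    by (rule card_mono[rotated]) (use finite_sink_free_orientations in auto)
  also have "\<dots> \<le> card ?S * card V"
    using card_image_le[of "?S \<times> {1..card V}"] finite_sink_free_orientations
    by (simp add: card_cartesian_product)
  finally show ?thesis .
qed

lemma hist_cost_eq_sum_indicator:
  assumes "wf_hist h" and sel: "hist_sink_rule sel"
  shows "hist_cost sel w h = (\<Sum>u\<in>V. w u * hist_cost sel (indicator {u}) h)"
proof -
  have "hist_cost sel w h = (\<Sum>i\<in>{1..<length h}. \<Sum>u\<in>V. w u * indicator {u} (sel (drop i h)))"
    unfolding hist_cost_def
  proof (intro sum.cong refl)
    fix i assume "i \<in> {1..<length h}"
    hence "sel (drop i h) \<in> V"
      using assms by (auto simp: wf_hist_def hist_sink_rule_def)
    thus "w (sel (drop i h)) = (\<Sum>u\<in>V. w u * indicator {u} (sel (drop i h)))"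
      using finite_V by (simp add: indicator_def sum.delta)
  qed
  thus ?thesis by (simp add: hist_cost_def sum_distrib_left sum.swap[of _ V])
qed

lemma expect_hist_cost_le:
  assumes sel: "hist_sink_rule sel" and SF: "sink_free_orientations V E \<noteq> {}"
    and w: "\<And>u. 0 \<le> w u"
  shows "expect (sp_hist V E sel j) (hist_cost sel w) \<le> real (card V) * (\<Sum>u\<in>V. w u)"
proof -
  let ?H = "sp_hist V E sel j"
  have "expect ?H (hist_cost sel w) = expect ?H (\<lambda>h. \<Sum>u\<in>V. w u * hist_cost sel (indicator {u}) h)"
    by (rule expect_cong) (rule hist_cost_eq_sum_indicator[OF wf_hist_sp_hist sel])
  also have "\<dots> = (\<Sum>u\<in>V. w u * expect ?H (hist_cost sel (indicator {u})))"
    by (simp add: expect_sum[OF finite_set_sp_hist])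
  also have "\<dots> \<le> (\<Sum>u\<in>V. w u * real (card V))"
  proof (intro sum_mono mult_left_mono)
    fix u
    have "0 < card (sink_free_orientations V E)"
      using SF finite_sink_free_orientations by (simp add: card_gt_0_iff)
    moreover have "real (card (single_sink u)) \<le> real (card (sink_free_orientations V E) * card V)"
      using card_single_sink_le[OF SF, of u] by linarith
    ultimately have "real (card (single_sink u)) / real (card (sink_free_orientations V E)) \<le> real (card V)"
      by (simp add: field_simps)
    thus "expect ?H (hist_cost sel (indicator {u})) \<le> real (card V)"
      using expect_pops_at_le[OF sel SF, of j u] by linarith
  qed (use w in simp)
  finally show ?thesis by (simp add: sum_distrib_right mult.commute)
qed

lemma prob_sp_hist_sink_free:
  assumes f: "sink_rule f" and sel: "hist_sink_rule sel"
  shows "measure_pmf.prob (sp_hist V E sel k) {h. \<not> has_sink V E (hd h)} =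
    expect (random_orientation E) (sf_prob f k)"
proof -
  let ?\<phi> = "\<lambda>\<sigma> a. if has_sink V E \<sigma> then 0 else 1 :: real"
  have "measure_pmf.prob (sp_hist V E sel k) {h. \<not> has_sink V E (hd h)} =
      expect (sp_hist V E sel k) (\<lambda>h. run_value f (\<lambda>_. 0) ?\<phi> 0 (hd h) (hist_cost sel (\<lambda>_. 0) h))"
    unfolding prob_eq_expect_indicator by (rule expect_cong) simp
  also have "\<dots> = expect (random_orientation E) (\<lambda>\<sigma>. run_value f (\<lambda>_. 0) ?\<phi> (k + 0) \<sigma> 0)"
    by (rule expect_sp_hist_run_value[OF f _ sel]) simp
  finally show ?thesis by (simp add: run_value_eq_sf_prob)
qed

lemma tendsto_expect_sf_prob:
  assumes f: "sink_rule f" and SF: "sink_free_orientations V E \<noteq> {}"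
  shows "(\<lambda>k. expect (random_orientation E) (sf_prob f k)) \<longlonglongrightarrow> 1"
proof (rule tendsto_sandwich[of "\<lambda>k. 1 - stall_bound k" _ _ "\<lambda>_. 1"])
  have fin: "finite (set_pmf (random_orientation E))"
    using finite_orientations by (simp add: set_random_orientation)
  show "\<forall>\<^sub>F k in sequentially. 1 - stall_bound k \<le> expect (random_orientation E) (sf_prob f k)"
    using expect_mono[OF fin, of "\<lambda>_. 1 - stall_bound _"] sf_prob_ge_stall_bound[OF f SF]
    by (simp add: set_random_orientation)
  show "\<forall>\<^sub>F k in sequentially. expect (random_orientation E) (sf_prob f k) \<le> 1"
    using expect_mono[OF fin, of _ "\<lambda>_. 1"] sf_prob_bounds
    by (simp add: set_random_orientation)
  show "(\<lambda>k. 1 - stall_bound k) \<longlonglongrightarrow> 1"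
    using tendsto_diff[OF tendsto_const stall_bound_tendsto_zero, of 1] by simp
qed simp

lemma prob_sp_hist_eq_pmf_rule_law:
  assumes f: "sink_rule f" and sel: "hist_sink_rule sel" and \<tau>: "\<tau> \<in> sink_free_orientations V E"
  shows "measure_pmf.prob (sp_hist V E sel k) {h. \<not> has_sink V E (hd h) \<and> hd h = \<tau>} =
    pmf (rule_law f k) \<tau>"
proof -
  define \<phi> where "\<phi> \<sigma> (a::real) = (if \<sigma> = \<tau> then 1 else 0 :: real)" for \<sigma> a
  have \<tau>': "\<tau> \<in> \<Omega>" "\<not> has_sink V E \<tau>" using \<tau> by (auto simp: sink_free_orientations_def)
  have \<phi>0: "has_sink V E \<sigma> \<Longrightarrow> \<phi> \<sigma> a = 0" for \<sigma> a using \<tau>' by (auto simp: \<phi>_def)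
  have "measure_pmf.prob (sp_hist V E sel k) {h. \<not> has_sink V E (hd h) \<and> hd h = \<tau>} =
      expect (sp_hist V E sel k) (\<lambda>h. run_value f (\<lambda>_. 0) \<phi> 0 (hd h) (hist_cost sel (\<lambda>_. 0) h))"
    unfolding prob_eq_expect_indicator by (rule expect_cong) (use \<tau>' in \<open>auto simp: \<phi>_def\<close>)
  also have "\<dots> = expect (random_orientation E) (\<lambda>\<sigma>. run_value f (\<lambda>_. 0) \<phi> (k + 0) \<sigma> 0)"
    by (rule expect_sp_hist_run_value[OF f \<phi>0 sel])
  also have "\<dots> = expect (rule_law f 0) (\<lambda>\<sigma>. run_value f (\<lambda>_. 0) \<phi> k \<sigma> 0)"
    by simp
  also have "\<dots> = expect (rule_law f (0 + k)) (\<lambda>\<sigma>. \<phi> \<sigma> 0)"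
    by (rule expect_rule_law_run_value) (rule \<phi>0)
  also have "\<dots> = pmf (rule_law f k) \<tau>"
    using \<tau>' finite_orientations
    by (simp add: expect_finite_sum[OF finite_orientations set_rule_law] \<phi>_def if_distrib
        sum.delta' cong: if_cong)
  finally show ?thesis .
qed

lemma expect_sf_prob_avoid_rule:
  assumes \<tau>: "\<tau> \<in> sink_free_orientations V E"
  shows "expect (random_orientation E) (sf_prob (avoid_rule u) k) =
    real (card (sink_free_orientations V E)) * pmf (rule_law (avoid_rule u) k) \<tau>"
proof -
  let ?L = "rule_law (avoid_rule u) k" and ?S = "sink_free_orientations V E"
  have "expect (random_orientation E) (sf_prob (avoid_rule u) k) =
      expect (rule_law (avoid_rule u) (0 + k)) (\<lambda>\<sigma>. if has_sink V E \<sigma> then 0 else 1)"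
    using expect_rule_law_run_value[of "\<lambda>\<sigma> a. if has_sink V E \<sigma> then 0 else 1" "avoid_rule u" 0 k]
    by (simp add: run_value_eq_sf_prob)
  also have "\<dots> = (\<Sum>\<sigma>\<in>\<Omega>. if \<sigma> \<in> ?S then pmf ?L \<sigma> else 0)"
    by (subst expect_finite_sum[OF finite_orientations set_rule_law])
      (auto simp: sink_free_orientations_def intro!: sum.cong)
  also have "\<dots> = (\<Sum>\<sigma>\<in>?S. pmf ?L \<sigma>)"
    by (simp add: sum.inter_filter[OF finite_orientations] sink_free_orientations_def)
  also have "\<dots> = (\<Sum>\<sigma>\<in>?S. pmf ?L \<tau>)"
    using \<tau> by (intro sum.cong refl pmf_avoid_law_sink_equiv)
      (auto simp: sink_free_orientations_iff sink_equiv_def)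
  finally show ?thesis by simp
qed

lemma sp_hist_terminates:
  assumes sel: "hist_sink_rule sel" and SF: "sink_free_orientations V E \<noteq> {}"
  shows "(\<lambda>k. measure_pmf.prob (sp_hist V E sel k) {h. \<not> has_sink V E (hd h)}) \<longlonglongrightarrow> 1"
  unfolding prob_sp_hist_sink_free[OF sink_rule_avoid_rule[of undefined] sel]
  by (rule tendsto_expect_sf_prob[OF sink_rule_avoid_rule SF])

lemma sp_hist_uniform:
  assumes sel: "hist_sink_rule sel" and \<tau>: "\<tau> \<in> sink_free_orientations V E"
  shows "(\<lambda>k. measure_pmf.prob (sp_hist V E sel k) {h. \<not> has_sink V E (hd h) \<and> hd h = \<tau>})
    \<longlonglongrightarrow> 1 / real (card (sink_free_orientations V E))"
proof -
  let ?S = "sink_free_orientations V E"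
  have SF: "?S \<noteq> {}" and "0 < card ?S"
    using \<tau> finite_sink_free_orientations by (auto simp: card_gt_0_iff)
  thus ?thesis
    using tendsto_divide[OF tendsto_expect_sf_prob[OF sink_rule_avoid_rule SF] tendsto_const,
        of "real (card ?S)" undefined]
    by (simp add: prob_sp_hist_eq_pmf_rule_law[OF sink_rule_avoid_rule[of undefined] sel \<tau>]
        expect_sf_prob_avoid_rule[OF \<tau>])
qed

lemma expect_pops_le:
  assumes "hist_sink_rule sel" "sink_free_orientations V E \<noteq> {}"
  shows "expect (sp_hist V E sel k) (\<lambda>h. real (length h - 1)) \<le> real (card V) ^ 2"
proof -
  have "hist_cost sel (\<lambda>_. 1) = (\<lambda>h. real (length h - 1))"
    by (simp add: fun_eq_iff hist_cost_def)
  thus ?thesis using expect_hist_cost_le[OF assms, of "\<lambda>_. 1" k] by (simp add: power2_eq_square)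
qed

lemma expect_reorientations_le:
  assumes "hist_sink_rule sel" "sink_free_orientations V E \<noteq> {}"
  shows "expect (sp_hist V E sel k) (\<lambda>h. real (reorientations E sel h)) \<le> 2 * real (card V) * real (card E)"
proof -
  have "hist_cost sel (\<lambda>u. real (degree E u)) = (\<lambda>h. real (reorientations E sel h))"
    by (simp add: fun_eq_iff hist_cost_def reorientations_def)
  thus ?thesis using expect_hist_cost_le[OF assms, of "\<lambda>u. real (degree E u)" k] sum_degree
    by (simp flip: of_nat_sum)
qed

end

theorem mainTheorem10:
  fixes V :: "'a set" and E :: "'a set set"
    and sel :: "('a set \<Rightarrow> 'a) list \<Rightarrow> 'a"
  assumes "simple_graph V E"
    and "sink_free_orientations V E \<noteq> {}"
    and "\<forall>h. has_sink V E (hd h) \<longrightarrow> sel h \<in> V \<and> is_sink E (hd h) (sel h)"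
  shows "((\<lambda>k. measure_pmf.prob (sp_hist V E sel k) {h. \<not> has_sink V E (hd h)})
           \<longlonglongrightarrow> 1)
    \<and> (\<forall>\<sigma>\<in>sink_free_orientations V E.
           (\<lambda>k. measure_pmf.prob (sp_hist V E sel k) {h. \<not> has_sink V E (hd h) \<and> hd h = \<sigma>})
             \<longlonglongrightarrow> 1 / real (card (sink_free_orientations V E)))
    \<and> (\<forall>k. measure_pmf.expectation (sp_hist V E sel k) (\<lambda>h. real (length h - 1))
           \<le> real (card V) ^ 2)
    \<and> (\<forall>k. measure_pmf.expectation (sp_hist V E sel k) (\<lambda>h. real (reorientations E sel h))
           \<le> 2 * real (card V) * real (card E))"
proof -
  interpret finite_simple_graph V E by standard (rule assms(1))
  have sel: "hist_sink_rule sel" using assms(3) by (simp add: hist_sink_rule_def)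
  show ?thesis
    using sp_hist_terminates[OF sel assms(2)] sp_hist_uniform[OF sel]
      expect_pops_le[OF sel assms(2)] expect_reorientations_le[OF sel assms(2)]
    by blast
qed

end
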